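(* Let $X$ be a Banach space, $A(t)\in\mathcal B(X)$ continuous in $t\in\mathbb R$, and suppose $x'=A(t)x$ admits a nonuniform $(h,k,\mu,\nu)$-dichotomy on $\mathbb R$ with constants $a<0\le b$, $\varepsilon\ge0$, $K>0$, where $h,k$ are differentiable. Let $f:\mathbb R\times X\to X$ be continuous and suppose there are constants $\alpha,\gamma>0$ such that for all $t\in\mathbb R$, $x,x_1,x_2\in X$: $\|f(t,x)\|\le\alpha\min\{h'(t)h(t)^{-1}\mu(|t|)^{-\varepsilon},k'(t)k(t)^{-1}\nu(|t|)^{-\varepsilon}\}$ and $\|f(t,x_1)-f(t,x_2)\|\le\gamma\min\{h'(t)h(t)^{-1}\mu(|t|)^{-\varepsilon},k'(t)k(t)^{-1}\nu(|t|)^{-\varepsilon}\}\|x_1-x_2\|$, and $K\gamma(1/|a|+1/b)<1$. Then $x'=A(t)x+f(t,x)$ is topologically equivalent to $x'=A(t)x$, and the equivalence function $H$ satisfies $\|H(t,x)-x\|\le K\alpha(1/|a|+1/b)$ for all $t\in\mathbb R$, $x\in X$.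
   Context: A growth rate is an increasing function $u:\mathbb R\to(0,\infty)$ with $u(0)=1$, $\lim_{t\to+\infty}u(t)=\infty$ and $\lim_{t\to-\infty}u(t)=0$; $h,k,\mu,\nu$ are growth rates. Nonuniform $(h,k,\mu,\nu)$-dichotomy on $\mathbb R$ for $x'=A(t)x$ with evolution operator $T(t,s)$ ($T(t,s)x(s)=x(t)$ for every solution): there are projections $P(t)$, $t\in\mathbb R$, with $P(t)T(t,s)=T(t,s)P(s)$ for all $t,s$, and constants $a<0\le b$, $\varepsilon\ge0$, $K>0$ such that $\|T(t,s)P(s)\|\le K(h(t)/h(s))^a\mu(|s|)^\varepsilon$ for $t\ge s$ and $\|T(t,s)Q(s)\|\le K(k(s)/k(t))^{-b}\nu(|s|)^\varepsilon$ for $s\ge t$, where $Q(t)=\mathrm{Id}-P(t)$. Topological equivalence: $x'=A(t)x$ and $x'=A(t)x+f(t,x)$ are topologically equivalent if there is $H:\mathbb R\times X\to X$ such that (i) $\|H(t,x)\|\to\infty$ as $\|x\|\to\infty$ uniformly in $t$; (ii) for each $t$, $H(t,\cdot)$ is a homeomorphism of $X$; (iii) $L(t,\cdot)=H(t,\cdot)^{-1}$ also satisfies (i); (iv) if $x(t)$ solves $x'=A(t)x+f(t,x)$ then $H(t,x(t))$ solves $x'=A(t)x$. *)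

theory Defs
  imports "HOL-Analysis.Analysis"
begin

definition growth_rate :: "(real \<Rightarrow> real) \<Rightarrow> bool" where
  "growth_rate u \<longleftrightarrow> strict_mono u \<and> (\<forall>t. u t > 0) \<and> u 0 = 1 \<and>
     filterlim u at_top at_top \<and> (u \<longlongrightarrow> 0) at_bot"

definition solves :: "(real \<Rightarrow> 'a::banach \<Rightarrow> 'a) \<Rightarrow> (real \<Rightarrow> 'a) \<Rightarrow> bool" where
  "solves F x \<longleftrightarrow> (\<forall>t. (x has_vector_derivative F t (x t)) (at t))"

definition evolution_op ::
  "(real \<Rightarrow> ('a::banach \<Rightarrow>\<^sub>L 'a)) \<Rightarrow> (real \<Rightarrow> real \<Rightarrow> ('a \<Rightarrow>\<^sub>L 'a)) \<Rightarrow> bool" where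
  "evolution_op A T \<longleftrightarrow>
     (\<forall>x. solves (\<lambda>t y. A t y) x \<longrightarrow> (\<forall>t s. T t s (x s) = x t))"

definition nonuniform_dichotomy ::
  "(real \<Rightarrow> real \<Rightarrow> ('a::banach \<Rightarrow>\<^sub>L 'a)) \<Rightarrow> (real \<Rightarrow> real) \<Rightarrow> (real \<Rightarrow> real) \<Rightarrow>
   (real \<Rightarrow> real) \<Rightarrow> (real \<Rightarrow> real) \<Rightarrow> real \<Rightarrow> real \<Rightarrow> real \<Rightarrow> real \<Rightarrow> bool" where
  "nonuniform_dichotomy T h k \<mu> \<nu> a b \<epsilon> K \<longleftrightarrow>
     a < 0 \<and> 0 \<le> b \<and> \<epsilon> \<ge> 0 \<and> K > 0 \<and>
     (\<exists>P :: real \<Rightarrow> ('a \<Rightarrow>\<^sub>L 'a).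
        (\<forall>t. P t o\<^sub>L P t = P t) \<and>
        (\<forall>t s. P t o\<^sub>L T t s = T t s o\<^sub>L P s) \<and>
        (\<forall>t s. t \<ge> s \<longrightarrow>
           norm (T t s o\<^sub>L P s) \<le> K * (h t / h s) powr a * \<mu> \<bar>s\<bar> powr \<epsilon>) \<and>
        (\<forall>t s. s \<ge> t \<longrightarrow>
           norm (T t s o\<^sub>L (id_blinfun - P s)) \<le> K * (k s / k t) powr (- b) * \<nu> \<bar>s\<bar> powr \<epsilon>))"

definition top_equiv_via ::
  "(real \<Rightarrow> 'a::banach \<Rightarrow> 'a) \<Rightarrow> (real \<Rightarrow> 'a \<Rightarrow> 'a) \<Rightarrow> (real \<Rightarrow> 'a \<Rightarrow> 'a) \<Rightarrow> bool" where
  "top_equiv_via F1 F2 H \<longleftrightarrow>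
     (\<forall>M. \<exists>R. \<forall>t x. norm x \<ge> R \<longrightarrow> norm (H t x) \<ge> M) \<and>
     (\<forall>t. \<exists>L. homeomorphism UNIV UNIV (H t) L) \<and>
     (\<forall>M. \<exists>R. \<forall>t y. norm y \<ge> R \<longrightarrow> norm (inv (H t) y) \<ge> M) \<and>
     (\<forall>x. solves F2 x \<longrightarrow> solves F1 (\<lambda>t. H t (x t)))"

end

theory Submission
  imports Defs
begin

text \<open>
  Let \<open>G\<close> be the Green operator of the dichotomy: \<open>G u\<close> is the solution of \<open>x' = A x + u\<close>
  obtained by integrating the stable part of \<open>u\<close> from \<open>-\<infinity>\<close> and the unstable part from \<open>+\<infinity>\<close>.
  The dichotomy estimates show that \<open>G\<close> maps inhomogeneities of size \<open>\<beta> * weight\<close>, where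
  \<open>weight\<close> is the minimum in the hypotheses on \<open>f\<close>, to functions of size \<open>\<beta> * \<theta>\<close> with
  \<open>\<theta> = K (1 / \<bar>a\<bar> + 1 / b)\<close>.  The conjugacy is \<open>H t v = v - G (f \<circ> y) t\<close>, where \<open>y\<close> is the
  perturbed solution through \<open>(t, v)\<close>; its inverse is \<open>L t w = y t\<close> for \<open>y = x + z\<close>, where \<open>x\<close> is
  the linear solution through \<open>(t, w)\<close> and \<open>z = G (f \<circ> y)\<close> is found by Banach's fixed point
  theorem, as \<open>\<gamma> \<theta> < 1\<close>.  Continuity of \<open>H t\<close> and \<open>L t\<close> follows because \<open>G u\<close> near \<open>t\<close>
  depends on \<open>u\<close> far away from \<open>t\<close> only through small tails of the dichotomy.
\<close>

definition signed_integral :: "(real \<Rightarrow> 'a::banach) \<Rightarrow> real \<Rightarrow> real \<Rightarrow> 'a" where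
  "signed_integral g a t = (if a \<le> t then integral {a..t} g else - integral {t..a} g)"

lemma signed_integral_same [simp]: "signed_integral g a a = 0"
  by (simp add: signed_integral_def)

lemma signed_integral_eq_diff:
  fixes g :: "real \<Rightarrow> 'a::banach"
  assumes g: "continuous_on UNIV g" and "c \<le> a" "c \<le> x"
  shows "signed_integral g a x = integral {c..x} g - integral {c..a} g"
proof -
  have int: "\<And>u v. g integrable_on {u..v}"
    by (rule integrable_continuous_interval) (use g continuous_on_subset in blast)
  show ?thesis
  proof (cases "a \<le> x")
    case True
    then show ?thesis
      using Henstock_Kurzweil_Integration.integral_combine[OF \<open>c \<le> a\<close> True int]
      by (simp add: signed_integral_def algebra_simps)
  next
    case False
    then show ?thesis
      using Henstock_Kurzweil_Integration.integral_combine[OF \<open>c \<le> x\<close> _ int, of a]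
      by (simp add: signed_integral_def algebra_simps)
  qed
qed

lemma has_vector_derivative_signed_integral:
  fixes g :: "real \<Rightarrow> 'a::banach"
  assumes g: "continuous_on UNIV g"
  shows "(signed_integral g a has_vector_derivative g t) (at t)"
proof -
  define c where "c = min a t - 1"
  have "((\<lambda>u. integral {c..u} g) has_vector_derivative g t) (at t within {c..t+1})"
    by (rule integral_has_vector_derivative) (auto simp: c_def intro: continuous_on_subset[OF g])
  then have "((\<lambda>u. integral {c..u} g) has_vector_derivative g t) (at t within {c<..<t+1})"
    by (rule has_vector_derivative_within_subset) auto
  then have "((\<lambda>u. integral {c..u} g) has_vector_derivative g t) (at t)"
    by (subst (asm) has_vector_derivative_within_open) (auto simp: c_def)
  then have "((\<lambda>u. integral {c..u} g - integral {c..a} g) has_vector_derivative g t) (at t)"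
    by (auto intro!: derivative_eq_intros)
  then show ?thesis
    by (rule has_vector_derivative_transform_within_open[where S="{c<..}"])
       (auto simp: c_def signed_integral_eq_diff[OF g, of "min a t - 1"])
qed

lemma signed_integral_diff:
  fixes g1 g2 :: "real \<Rightarrow> 'a::banach"
  assumes "continuous_on UNIV g1" "continuous_on UNIV g2"
  shows "signed_integral (\<lambda>s. g1 s - g2 s) a t = signed_integral g1 a t - signed_integral g2 a t"
proof -
  have "g integrable_on {u..v}" if "continuous_on UNIV g" for g :: "real \<Rightarrow> 'a" and u v
    by (rule integrable_continuous_interval) (use that continuous_on_subset in blast)
  then show ?thesis
    using assms by (simp add: signed_integral_def integral_diff)
qed

lemma norm_diff_le_by_majorant:
  fixes G :: "real \<Rightarrow> 'a::real_normed_vector"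
  assumes "a \<le> b"
    and G: "\<And>u. a \<le> u \<Longrightarrow> u \<le> b \<Longrightarrow> (G has_vector_derivative g u) (at u)"
    and \<Phi>: "\<And>u. a \<le> u \<Longrightarrow> u \<le> b \<Longrightarrow> (\<Phi> has_real_derivative \<phi> u) (at u)"
    and bound: "\<And>u. a \<le> u \<Longrightarrow> u \<le> b \<Longrightarrow> norm (g u) \<le> \<phi> u"
  shows "norm (G b - G a) \<le> \<Phi> b - \<Phi> a"
proof (cases "a = b")
  case False
  then have "a < b" using \<open>a \<le> b\<close> by simp
  then show ?thesis
  proof (rule differentiable_bound_general[where f'=g])
    show "continuous_on {a..b} G"
      using G by (intro continuous_at_imp_continuous_on ballI has_vector_derivative_continuous) auto
    show "continuous_on {a..b} \<Phi>"
      using \<Phi> by (intro continuous_at_imp_continuous_on ballI DERIV_isCont) auto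
    show "(\<Phi> has_vector_derivative \<phi> x) (at x)" if "a < x" "x < b" for x
      using \<Phi> that by (auto simp: has_real_derivative_iff_has_vector_derivative[symmetric])
  qed (use G bound in auto)
qed simp

lemma has_real_derivative_power_Suc_div_fact:
  assumes "(g has_real_derivative g') (at u)"
  shows "((\<lambda>u. c / fact (Suc n) * g u ^ Suc n) has_real_derivative c * g u ^ n / fact n * g') (at u)"
proof -
  have "((\<lambda>u. c / fact (Suc n) * g u ^ Suc n) has_real_derivative
     c / fact (Suc n) * (of_nat (Suc n) * (g' * g u ^ (Suc n - Suc 0)))) (at u)"
    by (intro DERIV_cmult DERIV_power assms)
  then show ?thesis
    by (rule DERIV_cong) (simp add: divide_simps)
qed

lemma convergent_if_tail_bound:
  fixes x :: "nat \<Rightarrow> 'a::banach"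
  assumes bound: "\<And>n m. n \<le> m \<Longrightarrow> norm (x m - x n) \<le> r n" and r: "r \<longlonglongrightarrow> 0"
  shows "convergent x"
proof -
  have "Cauchy x"
  proof (rule metric_CauchyI)
    fix e :: real assume "e > 0"
    then obtain M where M: "\<And>n. n \<ge> M \<Longrightarrow> norm (r n - 0) < e"
      using LIMSEQ_D[OF r] by blast
    have "dist (x m) (x n) < e" if "m \<ge> M" "n \<ge> M" for m n
      using bound[of n m] bound[of m n] M[of n] M[of m] that
      by (cases "n \<le> m") (auto simp: dist_norm norm_minus_commute)
    then show "\<exists>M. \<forall>m\<ge>M. \<forall>n\<ge>M. dist (x m) (x n) < e" by blast
  qed
  then show ?thesis by (simp add: Cauchy_convergent_iff)
qed

lemma norm_limit_le:
  fixes x :: "nat \<Rightarrow> 'a::real_normed_vector"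
  assumes "x \<longlonglongrightarrow> l" "\<forall>\<^sub>F n in sequentially. norm (x n) \<le> B"
  shows "norm l \<le> B"
  using tendsto_upperbound[OF tendsto_norm[OF assms(1)] assms(2)] by simp

lemma norm_large_if_displacement_bounded:
  fixes g :: "'b \<Rightarrow> 'a::real_normed_vector \<Rightarrow> 'a"
  assumes "\<And>t x. norm (g t x - x) \<le> c"
  shows "\<exists>R. \<forall>t x. R \<le> norm x \<longrightarrow> M \<le> norm (g t x)"
proof (intro exI allI impI)
  fix t and x :: 'a assume "M + c \<le> norm x"
  then show "M \<le> norm (g t x)"
    using norm_triangle_ineq3[of x "g t x"] norm_minus_commute[of x "g t x"] assms[of t x] by linarith
qed

lemma powr_ratio_mult_ratio:
  fixes x y d a :: real
  assumes "x > 0" "y > 0"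
  shows "(x / y) powr a * (d / y) = x powr a * y powr (- a - 1) * d"
  using assms by (simp add: powr_divide powr_diff powr_minus divide_simps)

lemma growth_rate_pos: "growth_rate u \<Longrightarrow> u t > 0"
  by (simp add: growth_rate_def)

lemma growth_rate_mono: "growth_rate u \<Longrightarrow> s \<le> t \<Longrightarrow> u s \<le> u t"
  by (auto simp: growth_rate_def dest: strict_mono_mono monoD)

lemma growth_rate_abs_ge_1: "growth_rate u \<Longrightarrow> u \<bar>t\<bar> \<ge> 1"
  using growth_rate_mono[of u 0 "\<bar>t\<bar>"] by (simp add: growth_rate_def)

lemma growth_rate_deriv_nonneg:
  assumes "growth_rate u" "(u has_real_derivative d) (at t)"
  shows "d \<ge> 0"
proof (rule ccontr)
  assume "\<not> d \<ge> 0"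
  then obtain e where "e > 0" "\<forall>h>0. h < e \<longrightarrow> u t > u (t + h)"
    using DERIV_neg_dec_right[OF assms(2)] by force
  then have "u t > u (t + e/2)" by auto
  moreover have "u t \<le> u (t + e/2)" using growth_rate_mono[OF assms(1)] \<open>e > 0\<close> by auto
  ultimately show False by simp
qed

lemma growth_rate_powr_tendsto_0_at_bot:
  assumes "growth_rate u" "c > 0"
  shows "((\<lambda>t. u t powr c) \<longlongrightarrow> 0) at_bot"
  by (rule tendsto_zero_powrI)
     (use assms in \<open>auto simp: growth_rate_def intro!: always_eventually less_imp_le\<close>)

lemma growth_rate_powr_tendsto_0_at_top:
  assumes "growth_rate u" "c > 0"
  shows "((\<lambda>t. u t powr (- c)) \<longlongrightarrow> 0) at_top"
  by (rule tendsto_neg_powr) (use assms in \<open>auto simp: growth_rate_def\<close>)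

section \<open>Global solutions of Lipschitz ODEs\<close>

text \<open>The Lipschitz constant \<open>lm t\<close> may grow in \<open>t\<close>; its primitive \<open>Lm\<close> replaces
  \<open>L * t\<close> in the classical Gronwall and Picard estimates, which then hold on all of \<open>\<real>\<close>.\<close>

locale lipschitz_ode =
  fixes F :: "real \<Rightarrow> 'v::banach \<Rightarrow> 'v" and Lm lm :: "real \<Rightarrow> real"
  assumes continuous_F: "continuous_on UNIV (\<lambda>(t, x). F t x)"
    and Lm_deriv: "\<And>t. (Lm has_real_derivative lm t) (at t)"
    and lm_nonneg: "\<And>t. lm t \<ge> 0"
    and lipschitz: "\<And>t x y. norm (F t x - F t y) \<le> lm t * norm (x - y)"
begin

lemma continuous_on_F_comp:
  assumes "continuous_on UNIV y"
  shows "continuous_on UNIV (\<lambda>t. F t (y t))"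
proof -
  have "continuous_on UNIV (\<lambda>t. (t, y t))"
    by (intro continuous_on_Pair continuous_on_id assms)
  then show ?thesis using continuous_on_compose2[OF continuous_F, of UNIV "\<lambda>t. (t, y t)"] by auto
qed

lemma Lm_mono: "s \<le> t \<Longrightarrow> Lm s \<le> Lm t"
  by (rule DERIV_nonneg_imp_nondecreasing) (use Lm_deriv lm_nonneg in blast)+

lemma continuous_on_Lm: "continuous_on S Lm"
  using Lm_deriv by (intro continuous_at_imp_continuous_on ballI DERIV_isCont) auto

lemma continuous_on_solution:
  "(\<And>t. (y has_vector_derivative F t (y t)) (at t)) \<Longrightarrow> continuous_on S y"
  by (intro continuous_at_imp_continuous_on ballI has_vector_derivative_continuous) auto

lemma solution_diff_le_by_exp_bound:
  assumes y1: "\<And>t. (y1 has_vector_derivative F t (y1 t)) (at t)"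
    and y2: "\<And>t. (y2 has_vector_derivative F t (y2 t)) (at t)"
    and "t0 \<le> x"
    and M: "\<And>u. t0 \<le> u \<Longrightarrow> u \<le> x \<Longrightarrow> norm (y1 u - y2 u) \<le> M * exp (2 * (Lm u - Lm t0))"
  shows "norm (y1 x - y2 x) \<le> norm (y1 t0 - y2 t0) + M * (exp (2 * (Lm x - Lm t0)) - 1) / 2"
proof -
  define E where "E u = exp (2 * (Lm u - Lm t0))" for u
  have "norm ((y1 x - y2 x) - (y1 t0 - y2 t0)) \<le> M * E x / 2 - M * E t0 / 2"
  proof (rule norm_diff_le_by_majorant[OF \<open>t0 \<le> x\<close>])
    show "((\<lambda>u. y1 u - y2 u) has_vector_derivative F u (y1 u) - F u (y2 u)) (at u)" for u
      by (intro derivative_intros y1 y2)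
    show "((\<lambda>u. M * E u / 2) has_real_derivative M * lm u * E u) (at u)" for u
      unfolding E_def by (auto intro!: derivative_eq_intros Lm_deriv)
    show "norm (F u (y1 u) - F u (y2 u)) \<le> M * lm u * E u" if "t0 \<le> u" "u \<le> x" for u
      using order_trans[OF lipschitz mult_left_mono[OF M[OF that] lm_nonneg]]
      by (simp add: E_def mult_ac)
  qed
  moreover have "E t0 = 1" by (simp add: E_def)
  ultimately show ?thesis
    using norm_triangle_ineq2[of "y1 x - y2 x" "y1 t0 - y2 t0"] by (simp add: E_def field_simps)
qed

text \<open>The maximum \<open>M\<close> of \<open>norm (y1 - y2) * exp (- 2 (Lm - Lm t0))\<close> on \<open>[t0, s]\<close> satisfies
  \<open>M \<le> norm (y1 t0 - y2 t0) + M / 2\<close> by the previous lemma.\<close>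

lemma gronwall_forward:
  assumes y1: "\<And>t. (y1 has_vector_derivative F t (y1 t)) (at t)"
    and y2: "\<And>t. (y2 has_vector_derivative F t (y2 t)) (at t)"
    and "t0 \<le> s"
  shows "norm (y1 s - y2 s) \<le> 2 * norm (y1 t0 - y2 t0) * exp (2 * (Lm s - Lm t0))"
proof -
  define d where "d u = norm (y1 u - y2 u)" for u
  define E where "E u = exp (2 * (Lm u - Lm t0))" for u
  have E_pos: "E u > 0" for u by (simp add: E_def)
  have cont: "continuous_on {t0..s} (\<lambda>u. d u / E u)"
    unfolding d_def E_def
    by (intro continuous_intros continuous_on_solution[OF y1] continuous_on_solution[OF y2]
          continuous_on_Lm) auto
  then obtain xm where xm: "xm \<in> {t0..s}" "\<And>u. u \<in> {t0..s} \<Longrightarrow> d u / E u \<le> d xm / E xm"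
    using continuous_attains_sup[OF compact_Icc _ cont] \<open>t0 \<le> s\<close> by auto
  define M where "M = d xm / E xm"
  have dM: "d u \<le> M * E u" if "u \<in> {t0..s}" for u
    using xm(2)[OF that] E_pos[of u] by (simp add: M_def field_simps)
  have E_xm: "E xm \<ge> 1" using Lm_mono[of t0 xm] xm(1) by (simp add: E_def)
  have "d xm \<le> d t0 + M * (E xm - 1) / 2"
    unfolding d_def E_def
    by (rule solution_diff_le_by_exp_bound[OF y1 y2]) (use dM xm(1) in \<open>auto simp: d_def E_def\<close>)
  moreover have "d t0 \<le> d t0 * E xm"
    using mult_left_mono[OF E_xm, of "d t0"] by (simp add: d_def)
  moreover have "M * E xm = d xm" "M \<ge> 0"
    using E_pos[of xm] by (simp_all add: M_def d_def)
  moreover have "M * (E xm - 1) / 2 = M * E xm / 2 - M / 2"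
    by (simp add: right_diff_distrib diff_divide_distrib)
  ultimately have "M * E xm \<le> d t0 * E xm + M * E xm / 2"
    by linarith
  then have "M \<le> 2 * d t0"
    using E_pos[of xm] by (simp add: field_simps)
  then have "d s \<le> 2 * d t0 * E s"
    using order_trans[OF dM[of s] mult_right_mono[OF _ less_imp_le[OF E_pos]]] \<open>t0 \<le> s\<close>
    by simp
  then show ?thesis by (simp add: d_def E_def)
qed

lemma lipschitz_ode_reflect: "lipschitz_ode (\<lambda>t x. - F (- t) x) (\<lambda>t. - Lm (- t)) (\<lambda>t. lm (- t))"
proof
  have "continuous_on UNIV (\<lambda>p::real \<times> 'v. (- fst p, snd p))" by (intro continuous_intros)
  then show "continuous_on UNIV (\<lambda>(t, x). - F (- t) x)"
    using continuous_on_compose2[OF continuous_F, of UNIV "\<lambda>p. (- fst p, snd p)"]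
    by (auto intro!: continuous_intros simp: case_prod_unfold)
  show "((\<lambda>t. - Lm (- t)) has_real_derivative lm (- t)) (at t)" for t
    by (auto intro!: derivative_eq_intros DERIV_chain2[OF Lm_deriv])
  show "0 \<le> lm (- t)" for t by (rule lm_nonneg)
  show "norm (- F (- t) x - - F (- t) y) \<le> lm (- t) * norm (x - y)" for t x y
    using lipschitz[of "-t" x y] by (simp add: norm_minus_commute)
qed

lemma has_vector_derivative_reflect_solution:
  assumes "\<And>t. (y has_vector_derivative F t (y t)) (at t)"
  shows "((\<lambda>t. y (- t)) has_vector_derivative - F (- t) (y (- t))) (at t)"
proof -
  have "((y \<circ> uminus) has_vector_derivative (- 1) *\<^sub>R F (- t) (y (- t))) (at t)"
    by (rule vector_diff_chain_at) (auto intro!: derivative_eq_intros assms)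
  then show ?thesis by (simp add: o_def)
qed

lemma gronwall:
  assumes y1: "\<And>t. (y1 has_vector_derivative F t (y1 t)) (at t)"
    and y2: "\<And>t. (y2 has_vector_derivative F t (y2 t)) (at t)"
  shows "norm (y1 s - y2 s) \<le> 2 * norm (y1 t0 - y2 t0) * exp (2 * \<bar>Lm s - Lm t0\<bar>)"
proof (cases "t0 \<le> s")
  case True
  then show ?thesis using gronwall_forward[OF y1 y2 True] Lm_mono[OF True] by simp
next
  case False
  have "norm (y1 (- (- s)) - y2 (- (- s))) \<le> 2 * norm (y1 (- (- t0)) - y2 (- (- t0))) *
     exp (2 * (- Lm (- (- s)) - - Lm (- (- t0))))"
    by (rule lipschitz_ode.gronwall_forward[OF lipschitz_ode_reflect])
       (use has_vector_derivative_reflect_solution[OF y1]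
          has_vector_derivative_reflect_solution[OF y2] False in auto)
  then show ?thesis using Lm_mono[of s t0] False by (simp add: abs_minus_commute)
qed

lemma solution_unique:
  assumes y1: "\<And>t. (y1 has_vector_derivative F t (y1 t)) (at t)"
    and y2: "\<And>t. (y2 has_vector_derivative F t (y2 t)) (at t)"
    and "y1 t0 = y2 t0"
  shows "y1 = y2"
  using gronwall[OF y1 y2, of _ t0] assms(3) by fastforce

lemma norm_le_by_Lm_majorant:
  assumes G: "\<And>u. (G has_vector_derivative g u) (at u)" and "G t0 = 0"
    and \<Phi>: "\<And>x. (\<Phi> has_real_derivative \<phi> x) (at x)" and "\<Phi> 0 = 0"
    and bound: "\<And>u. min t0 t \<le> u \<Longrightarrow> u \<le> max t0 t \<Longrightarrow> norm (g u) \<le> \<phi> \<bar>Lm u - Lm t0\<bar> * lm u"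
  shows "norm (G t) \<le> \<Phi> \<bar>Lm t - Lm t0\<bar>"
proof (cases "t0 \<le> t")
  case True
  have "norm (G t - G t0) \<le> \<Phi> (Lm t - Lm t0) - \<Phi> (Lm t0 - Lm t0)"
  proof (rule norm_diff_le_by_majorant[OF True G])
    show "((\<lambda>u. \<Phi> (Lm u - Lm t0)) has_real_derivative \<phi> (Lm u - Lm t0) * lm u) (at u)" for u
      by (rule DERIV_chain2[OF \<Phi>]) (auto intro!: derivative_eq_intros Lm_deriv)
    show "norm (g u) \<le> \<phi> (Lm u - Lm t0) * lm u" if "t0 \<le> u" "u \<le> t" for u
      using bound[of u] that Lm_mono[OF that(1)] True by simp
  qed
  then show ?thesis using \<open>G t0 = 0\<close> \<open>\<Phi> 0 = 0\<close> Lm_mono[OF True] by simp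
next
  case False
  have "norm (G t0 - G t) \<le> - \<Phi> (Lm t0 - Lm t0) - - \<Phi> (Lm t0 - Lm t)"
  proof (rule norm_diff_le_by_majorant[OF _ G])
    show "t \<le> t0" using False by simp
    show "((\<lambda>u. - \<Phi> (Lm t0 - Lm u)) has_real_derivative \<phi> (Lm t0 - Lm u) * lm u) (at u)" for u
      by (rule DERIV_chain2[OF \<Phi>, THEN DERIV_minus, THEN DERIV_cong])
         (auto intro!: derivative_eq_intros Lm_deriv)
    show "norm (g u) \<le> \<phi> (Lm t0 - Lm u) * lm u" if "t \<le> u" "u \<le> t0" for u
      using bound[of u] that Lm_mono[OF that(2)] False by (simp add: abs_minus_commute)
  qed
  then show ?thesis
    using \<open>G t0 = 0\<close> \<open>\<Phi> 0 = 0\<close> Lm_mono[of t t0] False by (simp add: abs_minus_commute)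
qed

primrec picard :: "'v \<Rightarrow> real \<Rightarrow> nat \<Rightarrow> real \<Rightarrow> 'v" where
  "picard x0 t0 0 = (\<lambda>t. x0)"
| "picard x0 t0 (Suc n) = (\<lambda>t. x0 + signed_integral (\<lambda>\<sigma>. F \<sigma> (picard x0 t0 n \<sigma>)) t0 t)"

declare picard.simps [simp del]

lemma picard_continuous_and_deriv:
  "continuous_on UNIV (picard x0 t0 n) \<and>
   (\<forall>t. (picard x0 t0 (Suc n) has_vector_derivative F t (picard x0 t0 n t)) (at t))"
proof (induction n)
  case 0
  have "continuous_on UNIV (\<lambda>t. F t x0)" by (rule continuous_on_F_comp) simp
  then show ?case
    by (auto intro!: derivative_eq_intros has_vector_derivative_signed_integral simp: picard.simps)
next
  case (Suc n)
  then have c: "continuous_on UNIV (picard x0 t0 (Suc n))"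
    by (intro continuous_at_imp_continuous_on ballI has_vector_derivative_continuous) auto
  then have "continuous_on UNIV (\<lambda>t. F t (picard x0 t0 (Suc n) t))" by (rule continuous_on_F_comp)
  with c show ?case
    by (simp add: picard.simps(2)[of x0 t0 "Suc n"])
       (auto intro!: derivative_eq_intros has_vector_derivative_signed_integral)
qed

lemma continuous_on_picard: "continuous_on S (picard x0 t0 n)"
  using picard_continuous_and_deriv continuous_on_subset by blast

lemma has_vector_derivative_picard_Suc:
  "(picard x0 t0 (Suc n) has_vector_derivative F t (picard x0 t0 n t)) (at t)"
  using picard_continuous_and_deriv by blast

lemma picard_initial [simp]: "picard x0 t0 n t0 = x0"
  by (cases n) (auto simp: picard.simps)

lemma picard_step_bound:
  assumes B: "\<And>t. t \<in> {t0-R..t0+R} \<Longrightarrow> norm (picard x0 t0 1 t - picard x0 t0 0 t) \<le> B"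
    and t: "t \<in> {t0-R..t0+R}"
  shows "norm (picard x0 t0 (Suc n) t - picard x0 t0 n t) \<le> B * \<bar>Lm t - Lm t0\<bar> ^ n / fact n"
  using t
proof (induction n arbitrary: t)
  case 0 then show ?case using B by simp
next
  case (Suc n)
  define G where "G u = picard x0 t0 (Suc (Suc n)) u - picard x0 t0 (Suc n) u" for u
  have "norm (G t) \<le> B / fact (Suc n) * \<bar>Lm t - Lm t0\<bar> ^ Suc n"
  proof (rule norm_le_by_Lm_majorant)
    show "(G has_vector_derivative F u (picard x0 t0 (Suc n) u) - F u (picard x0 t0 n u)) (at u)" for u
      unfolding G_def by (intro derivative_intros has_vector_derivative_picard_Suc)
    show "((\<lambda>x. B / fact (Suc n) * x ^ Suc n) has_real_derivative B * x ^ n / fact n * 1) (at x)" for x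
      by (rule has_real_derivative_power_Suc_div_fact) (rule DERIV_ident)
    show "norm (F u (picard x0 t0 (Suc n) u) - F u (picard x0 t0 n u))
        \<le> B * \<bar>Lm u - Lm t0\<bar> ^ n / fact n * 1 * lm u"
      if "min t0 t \<le> u" "u \<le> max t0 t" for u
    proof -
      have "u \<in> {t0-R..t0+R}" using that Suc.prems by auto
      then show ?thesis
        using order_trans[OF lipschitz mult_left_mono[OF Suc.IH lm_nonneg]] by (simp add: mult_ac)
    qed
  qed (simp_all add: G_def)
  then show ?case by (simp add: G_def)
qed

definition picard_limit :: "'v \<Rightarrow> real \<Rightarrow> real \<Rightarrow> 'v" where
  "picard_limit x0 t0 t = x0 + (\<Sum>i. picard x0 t0 (Suc i) t - picard x0 t0 i t)"

lemma picard_uniform_limit: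
  "uniform_limit {t0-R..t0+R} (picard x0 t0) (picard_limit x0 t0) sequentially"
proof -
  have "compact ((\<lambda>t. picard x0 t0 1 t - picard x0 t0 0 t) ` {t0-R..t0+R})"
    by (intro compact_continuous_image continuous_intros continuous_on_picard compact_Icc)
  then obtain B where B: "\<And>t. t \<in> {t0-R..t0+R} \<Longrightarrow> norm (picard x0 t0 1 t - picard x0 t0 0 t) \<le> B"
    by (meson bounded_iff compact_imp_bounded image_eqI)
  define C where "C = Lm (t0+R) - Lm (t0-R)"
  have C: "\<bar>Lm t - Lm t0\<bar> \<le> C" if "t \<in> {t0-R..t0+R}" for t
    using that Lm_mono[of t "t0+R"] Lm_mono[of "t0-R" t] Lm_mono[of t0 "t0+R"] Lm_mono[of "t0-R" t0]
    by (auto simp: C_def)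
  have sums: "uniform_limit {t0-R..t0+R} (\<lambda>n t. \<Sum>i<n. picard x0 t0 (Suc i) t - picard x0 t0 i t)
     (\<lambda>t. \<Sum>i. picard x0 t0 (Suc i) t - picard x0 t0 i t) sequentially"
  proof (rule Weierstrass_m_test[where M="\<lambda>i. B * (inverse (fact i) * C ^ i)"])
    show "norm (picard x0 t0 (Suc i) t - picard x0 t0 i t) \<le> B * (inverse (fact i) * C ^ i)"
      if t: "t \<in> {t0-R..t0+R}" for i t
    proof -
      have "norm (picard x0 t0 (Suc i) t - picard x0 t0 i t) \<le> B * \<bar>Lm t - Lm t0\<bar> ^ i / fact i"
        by (rule picard_step_bound[OF B t])
      also have "\<dots> \<le> B * C ^ i / fact i"
        using C[OF t] B[OF t] by (intro divide_right_mono mult_left_mono power_mono)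
          (auto intro: order_trans[OF norm_ge_zero])
      finally show ?thesis by (simp add: field_simps)
    qed
    show "summable (\<lambda>i. B * (inverse (fact i) * C ^ i))"
      by (intro summable_mult summable_exp)
  qed
  have telescope: "picard x0 t0 = (\<lambda>n t. x0 + (\<Sum>i<n. picard x0 t0 (Suc i) t - picard x0 t0 i t))"
    by (intro ext, subst sum_lessThan_telescope) (simp add: picard.simps)
  show ?thesis
    unfolding picard_limit_def by (subst telescope) (rule uniform_limit_add[OF uniform_limit_const sums])
qed

lemma continuous_on_picard_limit: "continuous_on S (picard_limit x0 t0)"
proof (intro continuous_at_imp_continuous_on ballI)
  fix t :: real
  define R where "R = \<bar>t - t0\<bar> + 1"
  have "continuous_on {t0-R..t0+R} (picard_limit x0 t0)"
    by (rule uniform_limit_theorem[OF _ picard_uniform_limit])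
       (auto intro!: always_eventually continuous_on_picard)
  moreover have "t \<in> interior {t0-R..t0+R}" by (auto simp: R_def)
  ultimately show "isCont (picard_limit x0 t0) t" by (rule continuous_on_interior)
qed

lemma picard_Suc_tendsto_integral:
  "(\<lambda>n. picard x0 t0 (Suc n) t) \<longlonglongrightarrow> x0 + signed_integral (\<lambda>\<sigma>. F \<sigma> (picard_limit x0 t0 \<sigma>)) t0 t"
proof (rule tendstoI)
  fix e :: real assume e: "e > 0"
  define R where "R = \<bar>t - t0\<bar> + 1"
  define C where "C = \<bar>Lm t - Lm t0\<bar> + 1"
  have C: "C > 0" by (simp add: C_def add_nonneg_pos)
  define Y where "Y u = x0 + signed_integral (\<lambda>\<sigma>. F \<sigma> (picard_limit x0 t0 \<sigma>)) t0 u" for u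
  have Y: "(Y has_vector_derivative F u (picard_limit x0 t0 u)) (at u)" for u
    unfolding Y_def
    by (auto intro!: derivative_eq_intros has_vector_derivative_signed_integral
          continuous_on_F_comp continuous_on_picard_limit)
  have "\<forall>\<^sub>F n in sequentially. \<forall>u\<in>{t0-R..t0+R}. dist (picard x0 t0 n u) (picard_limit x0 t0 u) < e / C"
    using uniform_limitD[OF picard_uniform_limit] e C by simp
  then show "\<forall>\<^sub>F n in sequentially. dist (picard x0 t0 (Suc n) t) (Y t) < e"
  proof eventually_elim
    case (elim n)
    have "norm (picard x0 t0 (Suc n) t - Y t) \<le> e / C * \<bar>Lm t - Lm t0\<bar>"
    proof (rule norm_le_by_Lm_majorant[where \<phi>="\<lambda>_. e / C"])
      show "((\<lambda>u. picard x0 t0 (Suc n) u - Y u) has_vector_derivative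
          F u (picard x0 t0 n u) - F u (picard_limit x0 t0 u)) (at u)" for u
        by (intro derivative_intros has_vector_derivative_picard_Suc Y)
      show "((\<lambda>x. e / C * x) has_real_derivative e / C) (at x)" for x
        using DERIV_cmult[OF DERIV_ident, of "e / C"] by simp
      show "norm (F u (picard x0 t0 n u) - F u (picard_limit x0 t0 u)) \<le> e / C * lm u"
        if "min t0 t \<le> u" "u \<le> max t0 t" for u
      proof -
        have "u \<in> {t0-R..t0+R}" using that by (auto simp: R_def)
        then have "norm (picard x0 t0 n u - picard_limit x0 t0 u) \<le> e / C"
          using elim by (auto simp: dist_norm intro: less_imp_le)
        from order_trans[OF lipschitz mult_left_mono[OF this lm_nonneg]] show ?thesis
          by (simp add: mult_ac)
      qed
    qed (simp_all add: Y_def)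
    also have "\<dots> < e / C * C"
      using e by (intro mult_strict_left_mono) (auto simp: C_def)
    also have "\<dots> = e" using C by simp
    finally show ?case by (simp add: dist_norm)
  qed
qed

lemma picard_limit_integral_eq:
  "picard_limit x0 t0 t = x0 + signed_integral (\<lambda>\<sigma>. F \<sigma> (picard_limit x0 t0 \<sigma>)) t0 t"
proof (rule LIMSEQ_unique[OF _ picard_Suc_tendsto_integral])
  have "t \<in> {t0 - (\<bar>t - t0\<bar> + 1)..t0 + (\<bar>t - t0\<bar> + 1)}" by auto
  from tendsto_uniform_limitI[OF picard_uniform_limit this]
  show "(\<lambda>n. picard x0 t0 (Suc n) t) \<longlonglongrightarrow> picard_limit x0 t0 t" by (rule LIMSEQ_Suc)
qed

lemma exists_solution: "\<exists>y. y t0 = x0 \<and> (\<forall>t. (y has_vector_derivative F t (y t)) (at t))"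
proof (intro exI[of _ "picard_limit x0 t0"] conjI allI)
  show "picard_limit x0 t0 t0 = x0" by (subst picard_limit_integral_eq) simp
  have "((\<lambda>u. x0 + signed_integral (\<lambda>\<sigma>. F \<sigma> (picard_limit x0 t0 \<sigma>)) t0 u)
      has_vector_derivative F t (picard_limit x0 t0 t)) (at t)" for t
    by (auto intro!: derivative_eq_intros has_vector_derivative_signed_integral
          continuous_on_F_comp continuous_on_picard_limit)
  then show "(picard_limit x0 t0 has_vector_derivative F t (picard_limit x0 t0 t)) (at t)" for t
    by (subst picard_limit_integral_eq[abs_def]) simp
qed

end

section \<open>The fundamental solution of a linear equation\<close>

locale continuous_linear_ode =
  fixes A :: "real \<Rightarrow> ('a::banach \<Rightarrow>\<^sub>L 'a)"
  assumes continuous_A: "continuous_on UNIV A"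
begin

definition LA :: "real \<Rightarrow> real" where
  "LA t = signed_integral (\<lambda>s. norm (A s)) 0 t"

lemma LA_deriv: "(LA has_real_derivative norm (A t)) (at t)"
  unfolding LA_def has_real_derivative_iff_has_vector_derivative
  by (intro has_vector_derivative_signed_integral continuous_intros continuous_A)

lemma continuous_on_A_compose:
  "continuous_on UNIV (\<lambda>(t, W). A t o\<^sub>L W)" "continuous_on UNIV (\<lambda>(t, W). W o\<^sub>L A t)"
  using continuous_A
  by (auto simp: case_prod_unfold intro!: continuous_intros continuous_on_compose2[of UNIV A])

lemma lipschitz_ode_left: "lipschitz_ode (\<lambda>t W. A t o\<^sub>L W) LA (\<lambda>t. norm (A t))"
proof
  show "norm ((A t o\<^sub>L W) - (A t o\<^sub>L W')) \<le> norm (A t) * norm (W - W')" for t W W'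
    using norm_blinfun_compose[of "A t" "W - W'"]
    by (simp add: bounded_bilinear.diff_right[OF bounded_bilinear_blinfun_compose])
qed (rule continuous_on_A_compose LA_deriv norm_ge_zero)+

lemma lipschitz_ode_right: "lipschitz_ode (\<lambda>t W. - (W o\<^sub>L A t)) LA (\<lambda>t. norm (A t))"
proof
  show "continuous_on UNIV (\<lambda>(t, W). - (W o\<^sub>L A t))"
    using continuous_on_A_compose(2) unfolding case_prod_unfold by (rule continuous_on_minus)
  show "norm (- (W o\<^sub>L A t) - - (W' o\<^sub>L A t)) \<le> norm (A t) * norm (W - W')" for t W W'
    using norm_blinfun_compose[of "W' - W" "A t"]
    by (simp add: bounded_bilinear.diff_left[OF bounded_bilinear_blinfun_compose]
        norm_minus_commute mult.commute)
qed (rule LA_deriv norm_ge_zero)+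

lemma lipschitz_ode_commutator:
  "lipschitz_ode (\<lambda>t W. (A t o\<^sub>L W) - (W o\<^sub>L A t)) (\<lambda>t. 2 * LA t) (\<lambda>t. 2 * norm (A t))"
proof
  show "continuous_on UNIV (\<lambda>(t, W). (A t o\<^sub>L W) - (W o\<^sub>L A t))"
    using continuous_on_A_compose unfolding case_prod_unfold by (rule continuous_on_diff)
  show "((\<lambda>t. 2 * LA t) has_real_derivative 2 * norm (A t)) (at t)" for t
    by (intro DERIV_cmult LA_deriv)
  show "norm ((A t o\<^sub>L W) - (W o\<^sub>L A t) - ((A t o\<^sub>L W') - (W' o\<^sub>L A t)))
      \<le> 2 * norm (A t) * norm (W - W')" for t W W'
  proof -
    have "(A t o\<^sub>L W) - (W o\<^sub>L A t) - ((A t o\<^sub>L W') - (W' o\<^sub>L A t))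
        = (A t o\<^sub>L (W - W')) - ((W - W') o\<^sub>L A t)"
      by (rule blinfun_eqI) (simp add: blinfun.bilinear_simps)
    also have "norm \<dots> \<le> norm (A t) * norm (W - W') + norm (W - W') * norm (A t)"
      by (rule order_trans[OF norm_triangle_ineq4 add_mono]) (intro norm_blinfun_compose)+
    finally show ?thesis by simp
  qed
qed simp

definition U :: "real \<Rightarrow> ('a \<Rightarrow>\<^sub>L 'a)" where
  "U = (SOME Y. Y 0 = id_blinfun \<and> (\<forall>t. (Y has_vector_derivative A t o\<^sub>L Y t) (at t)))"

definition V :: "real \<Rightarrow> ('a \<Rightarrow>\<^sub>L 'a)" where
  "V = (SOME Y. Y 0 = id_blinfun \<and> (\<forall>t. (Y has_vector_derivative - (Y t o\<^sub>L A t)) (at t)))"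

lemma U_0: "U 0 = id_blinfun" and U_deriv: "(U has_vector_derivative A t o\<^sub>L U t) (at t)"
  using someI_ex[OF lipschitz_ode.exists_solution[OF lipschitz_ode_left, of 0 id_blinfun], folded U_def]
  by auto

lemma V_0: "V 0 = id_blinfun" and V_deriv: "(V has_vector_derivative - (V t o\<^sub>L A t)) (at t)"
  using someI_ex[OF lipschitz_ode.exists_solution[OF lipschitz_ode_right, of 0 id_blinfun], folded V_def]
  by auto

lemma continuous_on_U: "continuous_on S U"
  using U_deriv by (intro continuous_at_imp_continuous_on ballI has_vector_derivative_continuous)

lemma continuous_on_V: "continuous_on S V"
  using V_deriv by (intro continuous_at_imp_continuous_on ballI has_vector_derivative_continuous)

text \<open>\<open>U t o V t\<close> and the identity both solve \<open>W' = A W - W A\<close> with \<open>W 0 = id\<close>.\<close>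

lemma U_compose_V: "U t o\<^sub>L V t = id_blinfun"
proof -
  have "(\<lambda>t. U t o\<^sub>L V t) = (\<lambda>t. id_blinfun)"
  proof (rule lipschitz_ode.solution_unique[OF lipschitz_ode_commutator, of _ _ 0])
    show "((\<lambda>t. U t o\<^sub>L V t) has_vector_derivative
        (A t o\<^sub>L (U t o\<^sub>L V t)) - ((U t o\<^sub>L V t) o\<^sub>L A t)) (at t)" for t
    proof -
      have "((\<lambda>t. U t o\<^sub>L V t) has_vector_derivative
          (U t o\<^sub>L - (V t o\<^sub>L A t)) + ((A t o\<^sub>L U t) o\<^sub>L V t)) (at t)"
        by (rule bounded_bilinear.has_vector_derivative[OF bounded_bilinear_blinfun_compose
              U_deriv V_deriv])
      moreover have "(U t o\<^sub>L - (V t o\<^sub>L A t)) + ((A t o\<^sub>L U t) o\<^sub>L V t)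
          = (A t o\<^sub>L (U t o\<^sub>L V t)) - ((U t o\<^sub>L V t) o\<^sub>L A t)"
        by (rule blinfun_eqI) (simp add: blinfun.bilinear_simps)
      ultimately show ?thesis by simp
    qed
    show "((\<lambda>t. id_blinfun) has_vector_derivative
        (A t o\<^sub>L id_blinfun) - (id_blinfun o\<^sub>L A t)) (at t)" for t
    proof -
      have "(A t o\<^sub>L id_blinfun) - (id_blinfun o\<^sub>L A t) = 0"
        by (rule blinfun_eqI) (simp add: blinfun.bilinear_simps)
      then show ?thesis by simp
    qed
    show "U 0 o\<^sub>L V 0 = id_blinfun" by (rule blinfun_eqI) (simp add: U_0 V_0)
  qed
  then show ?thesis by (rule fun_cong)
qed

lemma U_V_apply [simp]: "U t (V t w) = w"
  using U_compose_V[of t] by (metis blinfun_apply_blinfun_compose blinfun_apply_id_blinfun)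

lemma has_vector_derivative_U_apply: "((\<lambda>\<tau>. U \<tau> w) has_vector_derivative A t (U t w)) (at t)"
  using bounded_bilinear.has_vector_derivative[OF bounded_bilinear_blinfun_apply U_deriv,
      of "\<lambda>_. w" 0 t]
  by simp

lemma evolution_op_eq:
  assumes "evolution_op A T"
  shows "T t s = U t o\<^sub>L V s"
proof (rule blinfun_eqI)
  fix w
  have "solves (\<lambda>t y. A t y) (\<lambda>\<tau>. U \<tau> (V s w))"
    unfolding solves_def by (auto intro: has_vector_derivative_U_apply)
  with assms have "T t s (U s (V s w)) = U t (V s w)"
    unfolding evolution_op_def by blast
  then show "T t s w = (U t o\<^sub>L V s) w" by simp
qed

end

section \<open>Perturbations of a nonuniform dichotomy\<close>

locale dichotomy_perturbation = continuous_linear_ode A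
  for A :: "real \<Rightarrow> ('a::banach \<Rightarrow>\<^sub>L 'a)" +
  fixes T :: "real \<Rightarrow> real \<Rightarrow> ('a \<Rightarrow>\<^sub>L 'a)"
    and P :: "real \<Rightarrow> ('a \<Rightarrow>\<^sub>L 'a)"
    and f :: "real \<Rightarrow> 'a \<Rightarrow> 'a"
    and h k \<mu> \<nu> h' k' :: "real \<Rightarrow> real"
    and a b \<epsilon> K \<alpha> \<gamma> :: real
  assumes evolution: "evolution_op A T"
    and growth: "growth_rate h" "growth_rate k" "growth_rate \<mu>" "growth_rate \<nu>"
    and h_deriv: "\<And>t. (h has_real_derivative h' t) (at t)"
    and k_deriv: "\<And>t. (k has_real_derivative k' t) (at t)"
    and a_neg: "a < 0" and b_pos: "b > 0" and eps_nonneg: "\<epsilon> \<ge> 0" and K_pos: "K > 0"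
    and P_commute: "\<And>t s. P t o\<^sub>L T t s = T t s o\<^sub>L P s"
    and stable_bound: "\<And>t s. s \<le> t \<Longrightarrow>
       norm (T t s o\<^sub>L P s) \<le> K * (h t / h s) powr a * \<mu> \<bar>s\<bar> powr \<epsilon>"
    and unstable_bound: "\<And>t s. t \<le> s \<Longrightarrow>
       norm (T t s o\<^sub>L (id_blinfun - P s)) \<le> K * (k s / k t) powr (- b) * \<nu> \<bar>s\<bar> powr \<epsilon>"
    and f_cont: "continuous_on UNIV (\<lambda>(t, x). f t x)"
    and \<alpha>_pos: "\<alpha> > 0" and \<gamma>_pos: "\<gamma> > 0"
    and f_bound: "\<And>t x. norm (f t x) \<le>
       \<alpha> * min (h' t / h t * \<mu> \<bar>t\<bar> powr (- \<epsilon>)) (k' t / k t * \<nu> \<bar>t\<bar> powr (- \<epsilon>))"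
    and f_lip: "\<And>t x1 x2. norm (f t x1 - f t x2) \<le>
       \<gamma> * min (h' t / h t * \<mu> \<bar>t\<bar> powr (- \<epsilon>)) (k' t / k t * \<nu> \<bar>t\<bar> powr (- \<epsilon>))
         * norm (x1 - x2)"
    and small: "K * \<gamma> * (1 / \<bar>a\<bar> + 1 / b) < 1"
begin

lemma h_pos: "h t > 0" and k_pos: "k t > 0" and \<mu>_pos: "\<mu> t > 0" and \<nu>_pos: "\<nu> t > 0"
  using growth by (auto simp: growth_rate_pos)

lemma h'_nonneg: "h' t \<ge> 0"
  by (rule growth_rate_deriv_nonneg[OF growth(1) h_deriv])

lemma k'_nonneg: "k' t \<ge> 0"
  by (rule growth_rate_deriv_nonneg[OF growth(2) k_deriv])

definition weight :: "real \<Rightarrow> real" where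
  "weight t = min (h' t / h t * \<mu> \<bar>t\<bar> powr (- \<epsilon>)) (k' t / k t * \<nu> \<bar>t\<bar> powr (- \<epsilon>))"

lemma weight_nonneg: "weight t \<ge> 0"
  using h'_nonneg[of t] k'_nonneg[of t] h_pos[of t] k_pos[of t] by (simp add: weight_def)

lemma norm_f_le: "norm (f t x) \<le> \<alpha> * weight t"
  using f_bound by (simp add: weight_def)

lemma norm_f_diff_le: "norm (f t x1 - f t x2) \<le> \<gamma> * weight t * norm (x1 - x2)"
  using f_lip by (simp add: weight_def)

lemma norm_f_diff_le_add:
  "norm (f t (x1 + z1) - f t (x2 + z2)) \<le> \<gamma> * weight t * (norm (x1 - x2) + norm (z1 - z2))"
proof -
  have "norm ((x1 + z1) - (x2 + z2)) \<le> norm (x1 - x2) + norm (z1 - z2)"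
    using norm_triangle_ineq[of "x1 - x2" "z1 - z2"] by (simp add: algebra_simps)
  from order_trans[OF norm_f_diff_le mult_left_mono[OF this]]
  show ?thesis using \<gamma>_pos weight_nonneg by simp
qed

lemma norm_f_diff_le_twice: "norm (f t x - f t y) \<le> 2 * \<alpha> * weight t"
  using norm_triangle_ineq4[of "f t x" "f t y"] norm_f_le[of t x] norm_f_le[of t y] by linarith

lemma weight_le_log_deriv_h: "weight t \<le> h' t / h t"
proof -
  have "\<mu> \<bar>t\<bar> powr (- \<epsilon>) \<le> 1"
    using powr_mono[of "- \<epsilon>" 0 "\<mu> \<bar>t\<bar>"] eps_nonneg growth_rate_abs_ge_1[OF growth(3), of t]
    by simp
  then have "h' t / h t * \<mu> \<bar>t\<bar> powr (- \<epsilon>) \<le> h' t / h t"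
    using mult_left_mono[of _ 1 "h' t / h t"] h'_nonneg[of t] h_pos[of t] by simp
  then show ?thesis by (simp add: weight_def)
qed

definition \<theta> :: real where
  "\<theta> = K * (1 / \<bar>a\<bar> + 1 / b)"

lemma \<theta>_pos: "\<theta> > 0"
  unfolding \<theta>_def using K_pos a_neg b_pos by (intro mult_pos_pos add_pos_pos) auto

lemma contraction_factor_lt_1: "\<gamma> * \<theta> < 1"
  using small by (simp add: \<theta>_def mult_ac)

lemma contraction_factor_nonneg: "\<gamma> * \<theta> \<ge> 0"
  using \<gamma>_pos \<theta>_pos by simp

lemma U_P_V_apply: "U t (P 0 (V s w)) = (T t s o\<^sub>L P s) w"
proof -
  have "P 0 (V s w) = V s (P s w)"
    using arg_cong[where f="\<lambda>X. blinfun_apply X w", OF P_commute[of 0 s]]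
    by (simp add: evolution_op_eq[OF evolution] U_0)
  then show ?thesis by (simp add: evolution_op_eq[OF evolution])
qed

lemma U_Q_V_apply: "U t ((id_blinfun - P 0) (V s w)) = (T t s o\<^sub>L (id_blinfun - P s)) w"
  using U_P_V_apply[of t s w] by (simp add: blinfun.bilinear_simps evolution_op_eq[OF evolution])

lemma norm_stable_integrand_le:
  assumes "s \<le> \<tau>" "norm w \<le> \<beta> * weight s" "\<beta> \<ge> 0"
  shows "norm (U \<tau> (P 0 (V s w))) \<le> K * \<beta> * h \<tau> powr a * h s powr (- a - 1) * h' s"
proof -
  have "norm (U \<tau> (P 0 (V s w))) \<le> norm (T \<tau> s o\<^sub>L P s) * norm w"
    unfolding U_P_V_apply by (rule norm_blinfun)
  also have "\<dots> \<le> (K * (h \<tau> / h s) powr a * \<mu> \<bar>s\<bar> powr \<epsilon>) * (\<beta> * (h' s / h s * \<mu> \<bar>s\<bar> powr (- \<epsilon>)))"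
  proof (rule mult_mono)
    have "weight s \<le> h' s / h s * \<mu> \<bar>s\<bar> powr (- \<epsilon>)" by (simp add: weight_def)
    from order_trans[OF assms(2) mult_left_mono[OF this assms(3)]]
    show "norm w \<le> \<beta> * (h' s / h s * \<mu> \<bar>s\<bar> powr (- \<epsilon>))" .
  qed (use stable_bound assms K_pos in auto)
  also have "\<dots> = K * \<beta> * ((h \<tau> / h s) powr a * (h' s / h s)) * (\<mu> \<bar>s\<bar> powr \<epsilon> * \<mu> \<bar>s\<bar> powr (- \<epsilon>))"
    by (simp add: mult_ac)
  also have "\<mu> \<bar>s\<bar> powr \<epsilon> * \<mu> \<bar>s\<bar> powr (- \<epsilon>) = 1"
    using \<mu>_pos[of "\<bar>s\<bar>"] by (simp add: powr_minus)
  also have "(h \<tau> / h s) powr a * (h' s / h s) = h \<tau> powr a * h s powr (- a - 1) * h' s"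
    by (rule powr_ratio_mult_ratio[OF h_pos h_pos])
  finally show ?thesis by (simp add: mult_ac)
qed

lemma norm_unstable_integrand_le:
  assumes "\<tau> \<le> s" "norm w \<le> \<beta> * weight s" "\<beta> \<ge> 0"
  shows "norm (U \<tau> ((id_blinfun - P 0) (V s w))) \<le> K * \<beta> * k \<tau> powr b * k s powr (- b - 1) * k' s"
proof -
  have "norm (U \<tau> ((id_blinfun - P 0) (V s w))) \<le> norm (T \<tau> s o\<^sub>L (id_blinfun - P s)) * norm w"
    unfolding U_Q_V_apply by (rule norm_blinfun)
  also have "\<dots> \<le> (K * (k s / k \<tau>) powr (- b) * \<nu> \<bar>s\<bar> powr \<epsilon>) * (\<beta> * (k' s / k s * \<nu> \<bar>s\<bar> powr (- \<epsilon>)))"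
  proof (rule mult_mono)
    have "weight s \<le> k' s / k s * \<nu> \<bar>s\<bar> powr (- \<epsilon>)" by (simp add: weight_def)
    from order_trans[OF assms(2) mult_left_mono[OF this assms(3)]]
    show "norm w \<le> \<beta> * (k' s / k s * \<nu> \<bar>s\<bar> powr (- \<epsilon>))" .
  qed (use unstable_bound assms K_pos in auto)
  also have "(k s / k \<tau>) powr (- b) = (k \<tau> / k s) powr b"
    using k_pos[of s] k_pos[of \<tau>] by (simp add: powr_minus powr_divide)
  also have "K * (k \<tau> / k s) powr b * \<nu> \<bar>s\<bar> powr \<epsilon> * (\<beta> * (k' s / k s * \<nu> \<bar>s\<bar> powr (- \<epsilon>)))
      = K * \<beta> * ((k \<tau> / k s) powr b * (k' s / k s)) * (\<nu> \<bar>s\<bar> powr \<epsilon> * \<nu> \<bar>s\<bar> powr (- \<epsilon>))"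
    by (simp add: mult_ac)
  also have "\<nu> \<bar>s\<bar> powr \<epsilon> * \<nu> \<bar>s\<bar> powr (- \<epsilon>) = 1"
    using \<nu>_pos[of "\<bar>s\<bar>"] by (simp add: powr_minus)
  also have "(k \<tau> / k s) powr b * (k' s / k s) = k \<tau> powr b * k s powr (- b - 1) * k' s"
    by (rule powr_ratio_mult_ratio[OF k_pos k_pos])
  finally show ?thesis by (simp add: mult_ac)
qed

lemma stable_estimate:
  assumes G: "\<And>\<sigma>. c \<le> \<sigma> \<Longrightarrow> \<sigma> \<le> d \<Longrightarrow> (G has_vector_derivative P 0 (V \<sigma> (w \<sigma>))) (at \<sigma>)"
    and w: "\<And>\<sigma>. c \<le> \<sigma> \<Longrightarrow> \<sigma> \<le> d \<Longrightarrow> norm (w \<sigma>) \<le> \<beta> * weight \<sigma>"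
    and "c \<le> d" "d \<le> \<tau>" "\<beta> \<ge> 0"
  shows "norm (U \<tau> (G d) - U \<tau> (G c)) \<le> K * \<beta> / (- a) * h \<tau> powr a * (h d powr (- a) - h c powr (- a))"
proof -
  have "norm (U \<tau> (G d) - U \<tau> (G c)) \<le>
     K * \<beta> / (- a) * h \<tau> powr a * h d powr (- a) - K * \<beta> / (- a) * h \<tau> powr a * h c powr (- a)"
  proof (rule norm_diff_le_by_majorant[OF \<open>c \<le> d\<close>])
    show "((\<lambda>\<sigma>. U \<tau> (G \<sigma>)) has_vector_derivative U \<tau> (P 0 (V \<sigma> (w \<sigma>)))) (at \<sigma>)"
      if "c \<le> \<sigma>" "\<sigma> \<le> d" for \<sigma>
      using G[OF that] by (rule bounded_linear.has_vector_derivative[OF blinfun.bounded_linear_right])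
    show "((\<lambda>\<sigma>. K * \<beta> / (- a) * h \<tau> powr a * h \<sigma> powr (- a)) has_real_derivative
        K * \<beta> * h \<tau> powr a * h \<sigma> powr (- a - 1) * h' \<sigma>) (at \<sigma>)" for \<sigma>
      by (rule DERIV_cong[OF DERIV_cmult[OF DERIV_fun_powr[OF h_deriv h_pos]]])
         (use a_neg in \<open>simp add: field_simps\<close>)
    show "norm (U \<tau> (P 0 (V \<sigma> (w \<sigma>)))) \<le> K * \<beta> * h \<tau> powr a * h \<sigma> powr (- a - 1) * h' \<sigma>"
      if "c \<le> \<sigma>" "\<sigma> \<le> d" for \<sigma>
      by (rule norm_stable_integrand_le) (use that w assms in auto)
  qed
  then show ?thesis by (simp add: right_diff_distrib)
qed

lemma unstable_estimate:
  assumes G: "\<And>\<sigma>. c \<le> \<sigma> \<Longrightarrow> \<sigma> \<le> d \<Longrightarrow> (G has_vector_derivative (id_blinfun - P 0) (V \<sigma> (w \<sigma>))) (at \<sigma>)"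
    and w: "\<And>\<sigma>. c \<le> \<sigma> \<Longrightarrow> \<sigma> \<le> d \<Longrightarrow> norm (w \<sigma>) \<le> \<beta> * weight \<sigma>"
    and "c \<le> d" "\<tau> \<le> c" "\<beta> \<ge> 0"
  shows "norm (U \<tau> (G d) - U \<tau> (G c)) \<le> K * \<beta> / b * k \<tau> powr b * (k c powr (- b) - k d powr (- b))"
proof -
  have "norm (U \<tau> (G d) - U \<tau> (G c)) \<le>
     - K * \<beta> / b * k \<tau> powr b * k d powr (- b) - - K * \<beta> / b * k \<tau> powr b * k c powr (- b)"
  proof (rule norm_diff_le_by_majorant[OF \<open>c \<le> d\<close>])
    show "((\<lambda>\<sigma>. U \<tau> (G \<sigma>)) has_vector_derivative U \<tau> ((id_blinfun - P 0) (V \<sigma> (w \<sigma>)))) (at \<sigma>)"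
      if "c \<le> \<sigma>" "\<sigma> \<le> d" for \<sigma>
      using G[OF that] by (rule bounded_linear.has_vector_derivative[OF blinfun.bounded_linear_right])
    show "((\<lambda>\<sigma>. - K * \<beta> / b * k \<tau> powr b * k \<sigma> powr (- b)) has_real_derivative
        K * \<beta> * k \<tau> powr b * k \<sigma> powr (- b - 1) * k' \<sigma>) (at \<sigma>)" for \<sigma>
      by (rule DERIV_cong[OF DERIV_cmult[OF DERIV_fun_powr[OF k_deriv k_pos]]])
         (use b_pos in \<open>simp add: field_simps\<close>)
    show "norm (U \<tau> ((id_blinfun - P 0) (V \<sigma> (w \<sigma>)))) \<le> K * \<beta> * k \<tau> powr b * k \<sigma> powr (- b - 1) * k' \<sigma>"
      if "c \<le> \<sigma>" "\<sigma> \<le> d" for \<sigma>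
      by (rule norm_unstable_integrand_le) (use that w assms in auto)
  qed
  then show ?thesis by (simp add: right_diff_distrib)
qed

subsection \<open>The Green operator\<close>

definition admissible :: "(real \<Rightarrow> 'a) \<Rightarrow> bool" where
  "admissible u \<longleftrightarrow> continuous_on UNIV u \<and> (\<exists>\<beta>\<ge>0. \<forall>\<sigma>. norm (u \<sigma>) \<le> \<beta> * weight \<sigma>)"

lemma admissible_diff:
  assumes "admissible u1" "admissible u2"
  shows "admissible (\<lambda>\<sigma>. u1 \<sigma> - u2 \<sigma>)"
proof -
  obtain \<beta>1 \<beta>2 where "\<beta>1 \<ge> 0" "\<beta>2 \<ge> 0"
    and "\<And>\<sigma>. norm (u1 \<sigma>) \<le> \<beta>1 * weight \<sigma>" "\<And>\<sigma>. norm (u2 \<sigma>) \<le> \<beta>2 * weight \<sigma>"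
    using assms by (auto simp: admissible_def)
  then have "norm (u1 \<sigma> - u2 \<sigma>) \<le> (\<beta>1 + \<beta>2) * weight \<sigma>" for \<sigma>
    using norm_triangle_ineq4[of "u1 \<sigma>" "u2 \<sigma>"] by (simp add: distrib_right add_mono order_trans)
  with assms \<open>\<beta>1 \<ge> 0\<close> \<open>\<beta>2 \<ge> 0\<close> show ?thesis
    unfolding admissible_def by (intro conjI continuous_on_diff exI[of _ "\<beta>1 + \<beta>2"]) auto
qed

lemma admissible_f_comp:
  assumes "continuous_on UNIV y"
  shows "admissible (\<lambda>\<sigma>. f \<sigma> (y \<sigma>))"
proof -
  have "continuous_on UNIV (\<lambda>t. (t, y t))" by (intro continuous_on_Pair continuous_on_id assms)
  then have "continuous_on UNIV (\<lambda>\<sigma>. f \<sigma> (y \<sigma>))"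
    using continuous_on_compose2[OF f_cont, of UNIV "\<lambda>t. (t, y t)"] by auto
  then show ?thesis
    unfolding admissible_def using norm_f_le \<alpha>_pos by (auto intro!: exI[of _ \<alpha>])
qed

definition stable_integral :: "(real \<Rightarrow> 'a) \<Rightarrow> real \<Rightarrow> 'a" where
  "stable_integral u = signed_integral (\<lambda>\<sigma>. P 0 (V \<sigma> (u \<sigma>))) 0"

definition unstable_integral :: "(real \<Rightarrow> 'a) \<Rightarrow> real \<Rightarrow> 'a" where
  "unstable_integral u = signed_integral (\<lambda>\<sigma>. (id_blinfun - P 0) (V \<sigma> (u \<sigma>))) 0"

text \<open>Since \<open>T \<tau> \<sigma> = U \<tau> o V \<sigma>\<close> and \<open>P 0 o V \<sigma> = V \<sigma> o P \<sigma>\<close>, the following are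
  \<open>\<integral>\<^sub>-\<^sub>\<infinity>\<^sup>\<tau> T \<tau> \<sigma> (P \<sigma> (u \<sigma>)) d\<sigma>\<close> and \<open>\<integral>\<^sub>\<tau>\<^sup>\<infinity> T \<tau> \<sigma> (Q \<sigma> (u \<sigma>)) d\<sigma>\<close> with \<open>Q = id - P\<close>.\<close>

definition green_stable :: "(real \<Rightarrow> 'a) \<Rightarrow> real \<Rightarrow> 'a" where
  "green_stable u \<tau> = U \<tau> (stable_integral u \<tau> - lim (\<lambda>n. stable_integral u (- real n)))"

definition green_unstable :: "(real \<Rightarrow> 'a) \<Rightarrow> real \<Rightarrow> 'a" where
  "green_unstable u \<tau> = U \<tau> (lim (\<lambda>n. unstable_integral u (real n)) - unstable_integral u \<tau>)"

definition green :: "(real \<Rightarrow> 'a) \<Rightarrow> real \<Rightarrow> 'a" where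
  "green u \<tau> = green_stable u \<tau> - green_unstable u \<tau>"

lemma has_vector_derivative_stable_integral:
  "continuous_on UNIV u \<Longrightarrow> (stable_integral u has_vector_derivative P 0 (V c (u c))) (at c)"
  unfolding stable_integral_def
  by (intro has_vector_derivative_signed_integral continuous_intros continuous_on_V)

lemma has_vector_derivative_unstable_integral:
  "continuous_on UNIV u \<Longrightarrow>
    (unstable_integral u has_vector_derivative (id_blinfun - P 0) (V c (u c))) (at c)"
  unfolding unstable_integral_def
  by (intro has_vector_derivative_signed_integral continuous_intros continuous_on_V)

lemma stable_integral_diff:
  "continuous_on UNIV u1 \<Longrightarrow> continuous_on UNIV u2 \<Longrightarrow>
    stable_integral (\<lambda>\<sigma>. u1 \<sigma> - u2 \<sigma>) c = stable_integral u1 c - stable_integral u2 c"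
  unfolding stable_integral_def
  by (simp add: blinfun.bilinear_simps signed_integral_diff continuous_intros continuous_on_V)

lemma unstable_integral_diff:
  "continuous_on UNIV u1 \<Longrightarrow> continuous_on UNIV u2 \<Longrightarrow>
    unstable_integral (\<lambda>\<sigma>. u1 \<sigma> - u2 \<sigma>) c = unstable_integral u1 c - unstable_integral u2 c"
  unfolding unstable_integral_def
  by (simp add: blinfun.bilinear_simps signed_integral_diff continuous_intros continuous_on_V)

lemma h_powr_minus_a_tendsto_0: "(\<lambda>n. h (- real n) powr (- a)) \<longlonglongrightarrow> 0"
  using growth_rate_powr_tendsto_0_at_bot[OF growth(1), of "- a"] a_neg
  by (auto intro: filterlim_compose
      filterlim_compose[OF filterlim_uminus_at_bot_at_top filterlim_real_sequentially])

lemma k_powr_minus_b_tendsto_0: "(\<lambda>n. k (real n) powr (- b)) \<longlonglongrightarrow> 0"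
  using growth_rate_powr_tendsto_0_at_top[OF growth(2) b_pos]
  by (rule filterlim_compose) (rule filterlim_real_sequentially)

lemma convergent_stable_integral:
  assumes "admissible u"
  shows "convergent (\<lambda>n. stable_integral u (- real n))"
proof -
  obtain \<beta> where \<beta>: "\<beta> \<ge> 0" "\<And>\<sigma>. norm (u \<sigma>) \<le> \<beta> * weight \<sigma>"
    using assms by (auto simp: admissible_def)
  show ?thesis
  proof (rule convergent_if_tail_bound[where r="\<lambda>n. K * \<beta> / (- a) * h (- real n) powr (- a)"])
    fix n m :: nat assume "n \<le> m"
    have "norm (U 0 (stable_integral u (- real n)) - U 0 (stable_integral u (- real m)))
      \<le> K * \<beta> / (- a) * h 0 powr a * (h (- real n) powr (- a) - h (- real m) powr (- a))"
      by (rule stable_estimate[OF has_vector_derivative_stable_integral \<beta>(2)])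
         (use assms \<open>n \<le> m\<close> \<beta> in \<open>auto simp: admissible_def\<close>)
    also have "\<dots> \<le> K * \<beta> / (- a) * h (- real n) powr (- a)"
    proof -
      have "K * \<beta> / (- a) \<ge> 0" using a_neg K_pos \<beta> by (intro divide_nonneg_pos) auto
      from mult_left_mono[OF _ this, of "h (- real n) powr (- a) - h (- real m) powr (- a)"
          "h (- real n) powr (- a)"]
      show ?thesis using growth(1) by (simp add: growth_rate_def)
    qed
    finally show "norm (stable_integral u (- real m) - stable_integral u (- real n))
        \<le> K * \<beta> / (- a) * h (- real n) powr (- a)"
      by (simp add: U_0 norm_minus_commute)
  qed (use tendsto_mult_left[OF h_powr_minus_a_tendsto_0, of "K * \<beta> / (- a)"] in simp)
qed

lemma convergent_unstable_integral:
  assumes "admissible u"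
  shows "convergent (\<lambda>n. unstable_integral u (real n))"
proof -
  obtain \<beta> where \<beta>: "\<beta> \<ge> 0" "\<And>\<sigma>. norm (u \<sigma>) \<le> \<beta> * weight \<sigma>"
    using assms by (auto simp: admissible_def)
  show ?thesis
  proof (rule convergent_if_tail_bound[where r="\<lambda>n. K * \<beta> / b * k (real n) powr (- b)"])
    fix n m :: nat assume "n \<le> m"
    have "norm (U 0 (unstable_integral u (real m)) - U 0 (unstable_integral u (real n)))
      \<le> K * \<beta> / b * k 0 powr b * (k (real n) powr (- b) - k (real m) powr (- b))"
      by (rule unstable_estimate[OF has_vector_derivative_unstable_integral \<beta>(2)])
         (use assms \<open>n \<le> m\<close> \<beta> in \<open>auto simp: admissible_def\<close>)
    also have "\<dots> \<le> K * \<beta> / b * k (real n) powr (- b)"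
    proof -
      have "K * \<beta> / b \<ge> 0" using b_pos K_pos \<beta> by (intro divide_nonneg_pos) auto
      from mult_left_mono[OF _ this, of "k (real n) powr (- b) - k (real m) powr (- b)"
          "k (real n) powr (- b)"]
      show ?thesis using growth(2) by (simp add: growth_rate_def)
    qed
    finally show "norm (unstable_integral u (real m) - unstable_integral u (real n))
        \<le> K * \<beta> / b * k (real n) powr (- b)"
      by (simp add: U_0)
  qed (use tendsto_mult_left[OF k_powr_minus_b_tendsto_0, of "K * \<beta> / b"] in simp)
qed

lemma green_diff:
  assumes u1: "admissible u1" and u2: "admissible u2"
  shows "green (\<lambda>\<sigma>. u1 \<sigma> - u2 \<sigma>) \<tau> = green u1 \<tau> - green u2 \<tau>"
proof -
  have c: "continuous_on UNIV u1" "continuous_on UNIV u2"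
    using assms by (auto simp: admissible_def)
  have "(\<lambda>n. stable_integral (\<lambda>\<sigma>. u1 \<sigma> - u2 \<sigma>) (- real n)) \<longlonglongrightarrow>
      lim (\<lambda>n. stable_integral u1 (- real n)) - lim (\<lambda>n. stable_integral u2 (- real n))"
    unfolding stable_integral_diff[OF c]
    by (intro tendsto_diff convergent_stable_integral[OF u1, unfolded convergent_LIMSEQ_iff]
        convergent_stable_integral[OF u2, unfolded convergent_LIMSEQ_iff])
  moreover have "(\<lambda>n. unstable_integral (\<lambda>\<sigma>. u1 \<sigma> - u2 \<sigma>) (real n)) \<longlonglongrightarrow>
      lim (\<lambda>n. unstable_integral u1 (real n)) - lim (\<lambda>n. unstable_integral u2 (real n))"
    unfolding unstable_integral_diff[OF c]
    by (intro tendsto_diff convergent_unstable_integral[OF u1, unfolded convergent_LIMSEQ_iff]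
        convergent_unstable_integral[OF u2, unfolded convergent_LIMSEQ_iff])
  ultimately show ?thesis
    by (simp add: limI green_def green_stable_def green_unstable_def stable_integral_diff[OF c]
        unstable_integral_diff[OF c] blinfun.bilinear_simps algebra_simps)
qed

lemma has_vector_derivative_green:
  assumes "admissible u"
  shows "(green u has_vector_derivative A \<tau> (green u \<tau>) + u \<tau>) (at \<tau>)"
proof -
  have c: "continuous_on UNIV u" using assms by (simp add: admissible_def)
  define X where "X \<sigma> = stable_integral u \<sigma> - lim (\<lambda>n. stable_integral u (- real n))
    - (lim (\<lambda>n. unstable_integral u (real n)) - unstable_integral u \<sigma>)" for \<sigma>
  have green_eq: "green u = (\<lambda>\<sigma>. U \<sigma> (X \<sigma>))"
    by (intro ext) (simp add: green_def green_stable_def green_unstable_def X_def blinfun.bilinear_simps)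
  have "(X has_vector_derivative
      (P 0 (V \<tau> (u \<tau>)) - 0) - (0 - (id_blinfun - P 0) (V \<tau> (u \<tau>)))) (at \<tau>)"
    unfolding X_def[abs_def]
    by (intro derivative_intros has_vector_derivative_stable_integral
        has_vector_derivative_unstable_integral c)
  then have "(X has_vector_derivative V \<tau> (u \<tau>)) (at \<tau>)"
    by (simp add: blinfun.bilinear_simps)
  from bounded_bilinear.has_vector_derivative[OF bounded_bilinear_blinfun_apply U_deriv this]
  show ?thesis by (simp add: green_eq add.commute)
qed

lemma continuous_on_green: "admissible u \<Longrightarrow> continuous_on S (green u)"
  using has_vector_derivative_green
  by (intro continuous_at_imp_continuous_on ballI has_vector_derivative_continuous) auto

lemma norm_green_stable_le:
  assumes "admissible u"
    and \<beta>1: "\<And>\<sigma>. norm (u \<sigma>) \<le> \<beta>1 * weight \<sigma>"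
    and \<beta>2: "\<And>\<sigma>. c \<le> \<sigma> \<Longrightarrow> \<sigma> \<le> \<tau> \<Longrightarrow> norm (u \<sigma>) \<le> \<beta>2 * weight \<sigma>"
    and "c \<le> \<tau>" "\<beta>1 \<ge> 0" "\<beta>2 \<ge> 0"
  shows "norm (green_stable u \<tau>) \<le> K * \<beta>2 / (- a) * (1 - h \<tau> powr a * h c powr (- a))
      + K * \<beta>1 / (- a) * (h \<tau> powr a * h c powr (- a))"
proof -
  define I where "I = stable_integral u"
  have I: "(I has_vector_derivative P 0 (V \<sigma> (u \<sigma>))) (at \<sigma>)" for \<sigma>
    unfolding I_def using assms(1) by (intro has_vector_derivative_stable_integral) (simp add: admissible_def)
  have "(\<lambda>n. U \<tau> (I \<tau> - I (- real n))) \<longlonglongrightarrow> green_stable u \<tau>"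
    unfolding green_stable_def I_def
    by (intro tendsto_intros convergent_stable_integral[OF assms(1), unfolded convergent_LIMSEQ_iff])
  moreover have "\<forall>\<^sub>F n in sequentially. norm (U \<tau> (I \<tau> - I (- real n))) \<le>
      K * \<beta>2 / (- a) * (1 - h \<tau> powr a * h c powr (- a)) + K * \<beta>1 / (- a) * (h \<tau> powr a * h c powr (- a))"
    using eventually_ge_at_top[of "nat \<lceil>- c\<rceil>"]
  proof eventually_elim
    case (elim n)
    then have n: "- real n \<le> c" by linarith
    have near: "norm (U \<tau> (I \<tau>) - U \<tau> (I c))
        \<le> K * \<beta>2 / (- a) * h \<tau> powr a * (h \<tau> powr (- a) - h c powr (- a))"
      by (rule stable_estimate[OF I \<beta>2]) (use assms in auto)
    have "norm (U \<tau> (I c) - U \<tau> (I (- real n)))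
        \<le> K * \<beta>1 / (- a) * h \<tau> powr a * (h c powr (- a) - h (- real n) powr (- a))"
      by (rule stable_estimate[OF I \<beta>1]) (use assms n in auto)
    also have "\<dots> \<le> K * \<beta>1 / (- a) * h \<tau> powr a * h c powr (- a)"
    proof -
      have "K * \<beta>1 / (- a) * h \<tau> powr a \<ge> 0"
        using a_neg K_pos \<open>\<beta>1 \<ge> 0\<close> by (intro mult_nonneg_nonneg divide_nonneg_pos) auto
      from mult_left_mono[OF _ this, of "h c powr (- a) - h (- real n) powr (- a)" "h c powr (- a)"]
      show ?thesis by (simp add: mult.assoc)
    qed
    finally have far: "norm (U \<tau> (I c) - U \<tau> (I (- real n))) \<le> K * \<beta>1 / (- a) * h \<tau> powr a * h c powr (- a)" .
    have "norm (U \<tau> (I \<tau> - I (- real n)))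
        \<le> norm (U \<tau> (I \<tau>) - U \<tau> (I c)) + norm (U \<tau> (I c) - U \<tau> (I (- real n)))"
      using norm_triangle_ineq[of "U \<tau> (I \<tau>) - U \<tau> (I c)" "U \<tau> (I c) - U \<tau> (I (- real n))"]
      by (simp add: blinfun.bilinear_simps)
    moreover have "h \<tau> powr a * h \<tau> powr (- a) = 1" using h_pos[of \<tau>] by (simp add: powr_minus)
    then have "K * \<beta>2 / (- a) * h \<tau> powr a * (h \<tau> powr (- a) - h c powr (- a))
        = K * \<beta>2 / (- a) * (1 - h \<tau> powr a * h c powr (- a))"
      by (simp add: right_diff_distrib mult.assoc)
    ultimately show ?case using near far by (simp only: mult.assoc)
  qed
  ultimately show ?thesis by (rule norm_limit_le)
qed

lemma norm_green_unstable_le: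
  assumes "admissible u"
    and \<beta>1: "\<And>\<sigma>. norm (u \<sigma>) \<le> \<beta>1 * weight \<sigma>"
    and \<beta>2: "\<And>\<sigma>. \<tau> \<le> \<sigma> \<Longrightarrow> \<sigma> \<le> c \<Longrightarrow> norm (u \<sigma>) \<le> \<beta>2 * weight \<sigma>"
    and "\<tau> \<le> c" "\<beta>1 \<ge> 0" "\<beta>2 \<ge> 0"
  shows "norm (green_unstable u \<tau>) \<le> K * \<beta>2 / b * (1 - k \<tau> powr b * k c powr (- b))
      + K * \<beta>1 / b * (k \<tau> powr b * k c powr (- b))"
proof -
  define I where "I = unstable_integral u"
  have I: "(I has_vector_derivative (id_blinfun - P 0) (V \<sigma> (u \<sigma>))) (at \<sigma>)" for \<sigma>
    unfolding I_def using assms(1)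
    by (intro has_vector_derivative_unstable_integral) (simp add: admissible_def)
  have "(\<lambda>n. U \<tau> (I (real n) - I \<tau>)) \<longlonglongrightarrow> green_unstable u \<tau>"
    unfolding green_unstable_def I_def
    by (intro tendsto_intros convergent_unstable_integral[OF assms(1), unfolded convergent_LIMSEQ_iff])
  moreover have "\<forall>\<^sub>F n in sequentially. norm (U \<tau> (I (real n) - I \<tau>)) \<le>
      K * \<beta>2 / b * (1 - k \<tau> powr b * k c powr (- b)) + K * \<beta>1 / b * (k \<tau> powr b * k c powr (- b))"
    using eventually_ge_at_top[of "nat \<lceil>c\<rceil>"]
  proof eventually_elim
    case (elim n)
    then have n: "c \<le> real n" by linarith
    have near: "norm (U \<tau> (I c) - U \<tau> (I \<tau>))
        \<le> K * \<beta>2 / b * k \<tau> powr b * (k \<tau> powr (- b) - k c powr (- b))"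
      by (rule unstable_estimate[OF I \<beta>2]) (use assms in auto)
    have "norm (U \<tau> (I (real n)) - U \<tau> (I c))
        \<le> K * \<beta>1 / b * k \<tau> powr b * (k c powr (- b) - k (real n) powr (- b))"
      by (rule unstable_estimate[OF I \<beta>1]) (use assms n in auto)
    also have "\<dots> \<le> K * \<beta>1 / b * k \<tau> powr b * k c powr (- b)"
    proof -
      have "K * \<beta>1 / b * k \<tau> powr b \<ge> 0"
        using b_pos K_pos \<open>\<beta>1 \<ge> 0\<close> by (intro mult_nonneg_nonneg divide_nonneg_pos) auto
      from mult_left_mono[OF _ this, of "k c powr (- b) - k (real n) powr (- b)" "k c powr (- b)"]
      show ?thesis by (simp add: mult.assoc)
    qed
    finally have far: "norm (U \<tau> (I (real n)) - U \<tau> (I c)) \<le> K * \<beta>1 / b * k \<tau> powr b * k c powr (- b)" .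
    have "norm (U \<tau> (I (real n) - I \<tau>))
        \<le> norm (U \<tau> (I (real n)) - U \<tau> (I c)) + norm (U \<tau> (I c) - U \<tau> (I \<tau>))"
      using norm_triangle_ineq[of "U \<tau> (I (real n)) - U \<tau> (I c)" "U \<tau> (I c) - U \<tau> (I \<tau>)"]
      by (simp add: blinfun.bilinear_simps)
    moreover have "k \<tau> powr b * k \<tau> powr (- b) = 1" using k_pos[of \<tau>] by (simp add: powr_minus)
    then have "K * \<beta>2 / b * k \<tau> powr b * (k \<tau> powr (- b) - k c powr (- b))
        = K * \<beta>2 / b * (1 - k \<tau> powr b * k c powr (- b))"
      by (simp add: right_diff_distrib mult.assoc)
    ultimately show ?case using near far by (simp only: mult.assoc)
  qed
  ultimately show ?thesis by (rule norm_limit_le)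
qed

lemma norm_green_le_split:
  assumes "admissible u"
    and \<beta>1: "\<And>\<sigma>. norm (u \<sigma>) \<le> \<beta>1 * weight \<sigma>"
    and \<beta>2: "\<And>\<sigma>. c1 \<le> \<sigma> \<Longrightarrow> \<sigma> \<le> c2 \<Longrightarrow> norm (u \<sigma>) \<le> \<beta>2 * weight \<sigma>"
    and "c1 \<le> \<tau>" "\<tau> \<le> c2" "\<beta>1 \<ge> 0" "\<beta>2 \<ge> 0"
  shows "norm (green u \<tau>) \<le> K * \<beta>2 / (- a) * (1 - h \<tau> powr a * h c1 powr (- a))
      + K * \<beta>1 / (- a) * (h \<tau> powr a * h c1 powr (- a))
      + (K * \<beta>2 / b * (1 - k \<tau> powr b * k c2 powr (- b))
      + K * \<beta>1 / b * (k \<tau> powr b * k c2 powr (- b)))"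
proof -
  have "norm (green_stable u \<tau>) \<le> K * \<beta>2 / (- a) * (1 - h \<tau> powr a * h c1 powr (- a))
      + K * \<beta>1 / (- a) * (h \<tau> powr a * h c1 powr (- a))"
    by (rule norm_green_stable_le[OF assms(1) \<beta>1]) (use \<beta>2 assms in auto)
  moreover have "norm (green_unstable u \<tau>) \<le> K * \<beta>2 / b * (1 - k \<tau> powr b * k c2 powr (- b))
      + K * \<beta>1 / b * (k \<tau> powr b * k c2 powr (- b))"
    by (rule norm_green_unstable_le[OF assms(1) \<beta>1]) (use \<beta>2 assms in auto)
  ultimately show ?thesis
    using norm_triangle_ineq4[of "green_stable u \<tau>" "green_unstable u \<tau>"]
    unfolding green_def by linarith
qed

lemma norm_green_le:
  assumes "admissible u" "\<And>\<sigma>. norm (u \<sigma>) \<le> \<beta> * weight \<sigma>" "\<beta> \<ge> 0"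
  shows "norm (green u \<tau>) \<le> \<beta> * \<theta>"
proof -
  have "norm (green u \<tau>) \<le> K * \<beta> / (- a) * (1 - h \<tau> powr a * h \<tau> powr (- a))
      + K * \<beta> / (- a) * (h \<tau> powr a * h \<tau> powr (- a))
      + (K * \<beta> / b * (1 - k \<tau> powr b * k \<tau> powr (- b))
      + K * \<beta> / b * (k \<tau> powr b * k \<tau> powr (- b)))"
    by (rule norm_green_le_split) (use assms in auto)
  also have "\<dots> = \<beta> * \<theta>" using a_neg b_pos by (simp add: \<theta>_def field_simps)
  finally show ?thesis .
qed

lemma norm_green_le_tail:
  assumes "admissible u"
    and \<beta>1: "\<And>\<sigma>. norm (u \<sigma>) \<le> \<beta>1 * weight \<sigma>"
    and \<beta>2: "\<And>\<sigma>. c1 \<le> \<sigma> \<Longrightarrow> \<sigma> \<le> c2 \<Longrightarrow> norm (u \<sigma>) \<le> \<beta>2 * weight \<sigma>"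
    and "c1 \<le> \<tau>" "\<tau> \<le> c2" "\<beta>1 \<ge> 0" "\<beta>2 \<ge> 0"
  shows "norm (green u \<tau>) \<le> \<beta>2 * \<theta> +
     \<beta>1 * K * (h \<tau> powr a * h c1 powr (- a) / (- a) + k \<tau> powr b * k c2 powr (- b) / b)"
proof -
  have "K * \<beta>2 / (- a) \<ge> 0" using K_pos a_neg assms by (intro divide_nonneg_pos) auto
  then have "K * \<beta>2 / (- a) * (1 - h \<tau> powr a * h c1 powr (- a)) \<le> K * \<beta>2 / (- a) * 1"
    by (intro mult_left_mono) auto
  moreover have "K * \<beta>2 / b * (1 - k \<tau> powr b * k c2 powr (- b)) \<le> K * \<beta>2 / b * 1"
    using K_pos b_pos assms by (intro mult_left_mono) (auto intro: divide_nonneg_pos)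
  moreover have "K * \<beta>2 / (- a) * 1 + K * \<beta>1 / (- a) * (h \<tau> powr a * h c1 powr (- a))
      + (K * \<beta>2 / b * 1 + K * \<beta>1 / b * (k \<tau> powr b * k c2 powr (- b)))
      = \<beta>2 * \<theta> + \<beta>1 * K * (h \<tau> powr a * h c1 powr (- a) / (- a) + k \<tau> powr b * k c2 powr (- b) / b)"
    using a_neg b_pos by (simp add: \<theta>_def field_simps)
  ultimately show ?thesis
    using norm_green_le_split[OF assms] by linarith
qed

lemma dichotomy_tails_small:
  assumes "e > 0"
  obtains S where "S \<ge> R" "C1 * h (t - S) powr (- a) + C2 * k (t + S) powr (- b) < e"
proof -
  have "filterlim (\<lambda>S::real. t - S) at_bot at_top"
    unfolding filterlim_at_bot
  proof
    fix Z :: real show "\<forall>\<^sub>F S in at_top. t - S \<le> Z"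
      using eventually_ge_at_top[of "t - Z"] by eventually_elim simp
  qed
  moreover have "filterlim (\<lambda>S::real. t + S) at_top at_top"
    unfolding filterlim_at_top
  proof
    fix Z :: real show "\<forall>\<^sub>F S in at_top. Z \<le> t + S"
      using eventually_ge_at_top[of "Z - t"] by eventually_elim simp
  qed
  moreover have "- a > 0" using a_neg by simp
  ultimately have "((\<lambda>S. h (t - S) powr (- a)) \<longlongrightarrow> 0) at_top" "((\<lambda>S. k (t + S) powr (- b)) \<longlongrightarrow> 0) at_top"
    using filterlim_compose[OF growth_rate_powr_tendsto_0_at_bot[OF growth(1)]]
      filterlim_compose[OF growth_rate_powr_tendsto_0_at_top[OF growth(2) b_pos]]
    by blast+
  from tendsto_add[OF tendsto_mult_right_zero[OF this(1)] tendsto_mult_right_zero[OF this(2)]]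
  have "\<forall>\<^sub>F S in at_top. C1 * h (t - S) powr (- a) + C2 * k (t + S) powr (- b) < e"
    using \<open>e > 0\<close> by (intro order_tendstoD(2)) simp_all
  then obtain S0 where "\<And>S. S \<ge> S0 \<Longrightarrow> C1 * h (t - S) powr (- a) + C2 * k (t + S) powr (- b) < e"
    unfolding eventually_at_top_linorder by blast
  then show ?thesis using that[of "max S0 R"] by simp
qed

text \<open>Closeness of \<open>u1\<close> and \<open>u2\<close> is needed only on a large compact interval: the
  remote parts are damped by the dichotomy.\<close>

lemma green_diff_small:
  assumes "e > 0" "\<beta> \<ge> 0"
  obtains S \<eta> where "S \<ge> R" "\<eta> > 0"
    "\<And>u1 u2 \<tau>. admissible u1 \<Longrightarrow> admissible u2 \<Longrightarrow>
      (\<And>\<sigma>. norm (u1 \<sigma> - u2 \<sigma>) \<le> \<beta> * weight \<sigma>) \<Longrightarrow>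
      (\<And>\<sigma>. t - S \<le> \<sigma> \<Longrightarrow> \<sigma> \<le> t + S \<Longrightarrow> norm (u1 \<sigma> - u2 \<sigma>) \<le> \<eta> * weight \<sigma>) \<Longrightarrow>
      t - R \<le> \<tau> \<Longrightarrow> \<tau> \<le> t + R \<Longrightarrow> norm (green u1 \<tau> - green u2 \<tau>) < e"
proof -
  define C1 where "C1 = \<beta> * K * (h (t - R) powr a / (- a))"
  define C2 where "C2 = \<beta> * K * (k (t + R) powr b / b)"
  obtain S where S: "S \<ge> R" "C1 * h (t - S) powr (- a) + C2 * k (t + S) powr (- b) < e / 2"
    by (rule dichotomy_tails_small[of "e / 2"]) (use \<open>e > 0\<close> in simp)
  define \<eta> where "\<eta> = e / (2 * \<theta>)"
  have \<eta>: "\<eta> > 0" using \<open>e > 0\<close> \<theta>_pos by (simp add: \<eta>_def)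
  show ?thesis
  proof (rule that[OF S(1) \<eta>])
    fix u1 u2 \<tau>
    assume u: "admissible u1" "admissible u2"
      and \<beta>: "\<And>\<sigma>. norm (u1 \<sigma> - u2 \<sigma>) \<le> \<beta> * weight \<sigma>"
      and near: "\<And>\<sigma>. t - S \<le> \<sigma> \<Longrightarrow> \<sigma> \<le> t + S \<Longrightarrow> norm (u1 \<sigma> - u2 \<sigma>) \<le> \<eta> * weight \<sigma>"
      and \<tau>: "t - R \<le> \<tau>" "\<tau> \<le> t + R"
    have "norm (green (\<lambda>\<sigma>. u1 \<sigma> - u2 \<sigma>) \<tau>) \<le> \<eta> * \<theta> +
       \<beta> * K * (h \<tau> powr a * h (t - S) powr (- a) / (- a) + k \<tau> powr b * k (t + S) powr (- b) / b)"
      by (rule norm_green_le_tail[OF admissible_diff[OF u] \<beta> near])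
        (use \<tau> S \<eta> \<open>\<beta> \<ge> 0\<close> in auto)
    also have "\<dots> \<le> e / 2 + (C1 * h (t - S) powr (- a) + C2 * k (t + S) powr (- b))"
    proof -
      have "h \<tau> powr a \<le> h (t - R) powr a"
        by (rule powr_mono2') (use a_neg h_pos growth_rate_mono[OF growth(1)] \<tau> in auto)
      moreover have "k \<tau> powr b \<le> k (t + R) powr b"
        by (rule powr_mono2) (use b_pos k_pos growth_rate_mono[OF growth(2)] \<tau> in \<open>auto intro: less_imp_le\<close>)
      ultimately have "h \<tau> powr a * h (t - S) powr (- a) / (- a) + k \<tau> powr b * k (t + S) powr (- b) / b
          \<le> h (t - R) powr a * h (t - S) powr (- a) / (- a) + k (t + R) powr b * k (t + S) powr (- b) / b"
        using a_neg b_pos by (intro add_mono divide_right_mono mult_right_mono) auto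
      from mult_left_mono[OF this, of "\<beta> * K"]
      have "\<beta> * K * (h \<tau> powr a * h (t - S) powr (- a) / (- a) + k \<tau> powr b * k (t + S) powr (- b) / b)
          \<le> C1 * h (t - S) powr (- a) + C2 * k (t + S) powr (- b)"
        using K_pos \<open>\<beta> \<ge> 0\<close> by (simp add: C1_def C2_def algebra_simps)
      moreover have "\<eta> * \<theta> = e / 2" using \<theta>_pos by (simp add: \<eta>_def)
      ultimately show ?thesis by linarith
    qed
    also have "\<dots> < e" using S(2) by simp
    finally show "norm (green u1 \<tau> - green u2 \<tau>) < e"
      by (simp add: green_diff[OF u])
  qed
qed

subsection \<open>The conjugacy and its inverse\<close>

definition perturbed :: "real \<Rightarrow> 'a \<Rightarrow> 'a" where
  "perturbed t x = A t x + f t x"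

text \<open>Since \<open>weight \<le> h' / h\<close>, the perturbation is Lipschitz with constant \<open>\<gamma> h' / h\<close>,
  whose primitive \<open>\<gamma> ln h\<close> is finite everywhere: solutions exist globally.\<close>

lemma lipschitz_ode_perturbed:
  "lipschitz_ode perturbed (\<lambda>t. LA t + \<gamma> * ln (h t)) (\<lambda>t. norm (A t) + \<gamma> * (h' t / h t))"
proof
  have "continuous_on UNIV (\<lambda>p::real \<times> 'a. A (fst p))"
    by (rule continuous_on_compose2[OF continuous_A]) (auto intro: continuous_intros)
  then have "continuous_on UNIV (\<lambda>p::real \<times> 'a. A (fst p) (snd p))"
    by (auto intro!: continuous_intros)
  then show "continuous_on UNIV (\<lambda>(t, x). perturbed t x)"
    unfolding perturbed_def case_prod_unfold
    using continuous_on_add f_cont[unfolded case_prod_unfold] by blast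
  show "((\<lambda>t. LA t + \<gamma> * ln (h t)) has_real_derivative norm (A t) + \<gamma> * (h' t / h t)) (at t)" for t
    by (rule DERIV_cong[OF DERIV_add[OF LA_deriv DERIV_cmult[OF DERIV_ln[THEN DERIV_chain2, OF h_pos h_deriv]]]])
       (simp add: divide_inverse mult_ac)
  show "0 \<le> norm (A t) + \<gamma> * (h' t / h t)" for t
    using h'_nonneg[of t] h_pos[of t] \<gamma>_pos by simp
  show "norm (perturbed t x - perturbed t y) \<le> (norm (A t) + \<gamma> * (h' t / h t)) * norm (x - y)" for t x y
  proof -
    have "norm (perturbed t x - perturbed t y) \<le> norm (A t (x - y)) + norm (f t x - f t y)"
      using norm_triangle_ineq[of "A t (x - y)" "f t x - f t y"]
      by (simp add: perturbed_def blinfun.bilinear_simps algebra_simps)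
    also have "\<dots> \<le> norm (A t) * norm (x - y) + \<gamma> * (h' t / h t) * norm (x - y)"
    proof (rule add_mono)
      have "\<gamma> * weight t * norm (x - y) \<le> \<gamma> * (h' t / h t) * norm (x - y)"
        using weight_le_log_deriv_h \<gamma>_pos by (intro mult_right_mono mult_left_mono) auto
      then show "norm (f t x - f t y) \<le> \<gamma> * (h' t / h t) * norm (x - y)"
        using norm_f_diff_le order_trans by blast
    qed (rule norm_blinfun)
    finally show ?thesis by (simp add: algebra_simps)
  qed
qed

definition perturbed_solution :: "real \<Rightarrow> 'a \<Rightarrow> real \<Rightarrow> 'a" where
  "perturbed_solution t v = (SOME y. y t = v \<and> solves perturbed y)"

lemma perturbed_solution: "perturbed_solution t v t = v" "solves perturbed (perturbed_solution t v)"
  using someI_ex[OF lipschitz_ode.exists_solution[OF lipschitz_ode_perturbed, of t v]]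
  unfolding perturbed_solution_def solves_def by auto

lemma perturbed_solution_unique: "solves perturbed y \<Longrightarrow> perturbed_solution \<tau> (y \<tau>) = y"
  using lipschitz_ode.solution_unique[OF lipschitz_ode_perturbed, of "perturbed_solution \<tau> (y \<tau>)" y \<tau>]
    perturbed_solution[of \<tau> "y \<tau>"]
  by (auto simp: solves_def)

lemma continuous_on_solves: "solves F y \<Longrightarrow> continuous_on S y"
  unfolding solves_def
  by (intro continuous_at_imp_continuous_on ballI has_vector_derivative_continuous) auto

lemma admissible_f_perturbed_solution: "admissible (\<lambda>\<sigma>. f \<sigma> (perturbed_solution t v \<sigma>))"
  by (rule admissible_f_comp[OF continuous_on_solves[OF perturbed_solution(2)]])

definition H :: "real \<Rightarrow> 'a \<Rightarrow> 'a" where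
  "H t v = v - green (\<lambda>\<sigma>. f \<sigma> (perturbed_solution t v \<sigma>)) t"

lemma norm_H_diff_le: "norm (H t v - v) \<le> \<alpha> * \<theta>"
  using norm_green_le[OF admissible_f_perturbed_solution norm_f_le] \<alpha>_pos by (simp add: H_def)

lemma H_solution: "solves perturbed y \<Longrightarrow> H \<tau> (y \<tau>) = y \<tau> - green (\<lambda>\<sigma>. f \<sigma> (y \<sigma>)) \<tau>"
  by (simp add: H_def perturbed_solution_unique)

lemma solves_linear_H:
  assumes y: "solves perturbed y"
  shows "solves (\<lambda>t x. A t x) (\<lambda>\<tau>. H \<tau> (y \<tau>))"
  unfolding solves_def
proof
  fix \<tau>
  have "((\<lambda>\<tau>. y \<tau> - green (\<lambda>\<sigma>. f \<sigma> (y \<sigma>)) \<tau>) has_vector_derivative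
      perturbed \<tau> (y \<tau>) - (A \<tau> (green (\<lambda>\<sigma>. f \<sigma> (y \<sigma>)) \<tau>) + f \<tau> (y \<tau>))) (at \<tau>)"
    using y unfolding solves_def
    by (intro has_vector_derivative_diff has_vector_derivative_green
        admissible_f_comp[OF continuous_on_solves[OF y]]) auto
  then show "((\<lambda>\<tau>. H \<tau> (y \<tau>)) has_vector_derivative A \<tau> (H \<tau> (y \<tau>))) (at \<tau>)"
    by (simp add: H_solution[OF y] perturbed_def blinfun.bilinear_simps)
qed

lemma perturbed_solution_diff_le:
  assumes "t - S \<le> \<sigma>" "\<sigma> \<le> t + S"
  shows "norm (perturbed_solution t v \<sigma> - perturbed_solution t v0 \<sigma>)
    \<le> 2 * exp (2 * (LA (t + S) + \<gamma> * ln (h (t + S)) - (LA (t - S) + \<gamma> * ln (h (t - S)))))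
      * norm (v - v0)"
proof -
  interpret lipschitz_ode perturbed "\<lambda>t. LA t + \<gamma> * ln (h t)" "\<lambda>t. norm (A t) + \<gamma> * (h' t / h t)"
    by (rule lipschitz_ode_perturbed)
  have "norm (perturbed_solution t v \<sigma> - perturbed_solution t v0 \<sigma>) \<le>
      2 * norm (v - v0) * exp (2 * \<bar>LA \<sigma> + \<gamma> * ln (h \<sigma>) - (LA t + \<gamma> * ln (h t))\<bar>)"
    using gronwall[of "perturbed_solution t v" "perturbed_solution t v0" \<sigma> t] perturbed_solution
    by (simp add: solves_def)
  also have "\<bar>LA \<sigma> + \<gamma> * ln (h \<sigma>) - (LA t + \<gamma> * ln (h t))\<bar>
      \<le> LA (t + S) + \<gamma> * ln (h (t + S)) - (LA (t - S) + \<gamma> * ln (h (t - S)))"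
    using Lm_mono[of \<sigma> "t + S"] Lm_mono[of "t - S" \<sigma>] Lm_mono[of t "t + S"] Lm_mono[of "t - S" t] assms
    by auto
  finally show ?thesis by (simp add: mult_ac mult_left_mono)
qed

lemma continuous_on_H: "continuous_on UNIV (H t)"
proof (intro continuous_at_imp_continuous_on ballI)
  fix v0 :: 'a
  show "isCont (H t) v0"
    unfolding continuous_at_eps_delta
  proof (intro allI impI)
    fix e :: real assume "e > 0"
    obtain S \<eta> where S: "0 \<le> S" "\<eta> > 0"
      and small_green: "\<And>u1 u2 \<tau>. admissible u1 \<Longrightarrow> admissible u2 \<Longrightarrow>
        (\<And>\<sigma>. norm (u1 \<sigma> - u2 \<sigma>) \<le> 2 * \<alpha> * weight \<sigma>) \<Longrightarrow>
        (\<And>\<sigma>. t - S \<le> \<sigma> \<Longrightarrow> \<sigma> \<le> t + S \<Longrightarrow> norm (u1 \<sigma> - u2 \<sigma>) \<le> \<eta> * weight \<sigma>) \<Longrightarrow>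
        t - 0 \<le> \<tau> \<Longrightarrow> \<tau> \<le> t + 0 \<Longrightarrow> norm (green u1 \<tau> - green u2 \<tau>) < e / 2"
      by (rule green_diff_small[of "e / 2" "2 * \<alpha>" 0 t]) (use \<open>e > 0\<close> \<alpha>_pos in auto)
    define M where "M = 2 * exp (2 * (LA (t + S) + \<gamma> * ln (h (t + S)) - (LA (t - S) + \<gamma> * ln (h (t - S)))))"
    have M: "M > 0" by (simp add: M_def)
    show "\<exists>d>0. \<forall>v. dist v v0 < d \<longrightarrow> dist (H t v) (H t v0) < e"
    proof (intro exI conjI allI impI)
      show "min (e / 2) (\<eta> / (\<gamma> * M)) > 0" using \<open>e > 0\<close> S M \<gamma>_pos by simp
      fix v assume v: "dist v v0 < min (e / 2) (\<eta> / (\<gamma> * M))"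
      let ?u = "\<lambda>v \<sigma>. f \<sigma> (perturbed_solution t v \<sigma>)"
      have "norm (?u v \<sigma> - ?u v0 \<sigma>) \<le> 2 * \<alpha> * weight \<sigma>" for \<sigma>
        by (rule norm_f_diff_le_twice)
      moreover have "norm (?u v \<sigma> - ?u v0 \<sigma>) \<le> \<eta> * weight \<sigma>" if "t - S \<le> \<sigma>" "\<sigma> \<le> t + S" for \<sigma>
      proof -
        have "norm (?u v \<sigma> - ?u v0 \<sigma>) \<le> \<gamma> * weight \<sigma> * (M * norm (v - v0))"
          using order_trans[OF norm_f_diff_le mult_left_mono[OF perturbed_solution_diff_le[OF that]]]
            \<gamma>_pos weight_nonneg by (simp add: M_def)
        also have "\<dots> \<le> \<gamma> * weight \<sigma> * (\<eta> / \<gamma>)"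
        proof -
          have "M * norm (v - v0) \<le> M * (\<eta> / (\<gamma> * M))"
            using v M by (intro mult_left_mono) (auto simp: dist_norm)
          then show ?thesis using M \<gamma>_pos weight_nonneg by (intro mult_left_mono) auto
        qed
        finally show ?thesis using \<gamma>_pos by (simp add: mult.commute)
      qed
      ultimately have "norm (green (?u v) t - green (?u v0) t) < e / 2"
        by (intro small_green admissible_f_perturbed_solution) auto
      moreover have "norm (v - v0) < e / 2" using v by (simp add: dist_norm)
      ultimately show "dist (H t v) (H t v0) < e"
        using norm_triangle_ineq4[of "v - v0" "green (?u v) t - green (?u v0) t"]
        by (simp add: H_def dist_norm algebra_simps)
    qed
  qed
qed

definition linear_solution :: "real \<Rightarrow> 'a \<Rightarrow> real \<Rightarrow> 'a" where
  "linear_solution t w \<tau> = U \<tau> (V t w)"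

lemma linear_solution_initial [simp]: "linear_solution t w t = w"
  by (simp add: linear_solution_def)

lemma continuous_on_linear_solution: "continuous_on S (linear_solution t w)"
  unfolding linear_solution_def by (intro continuous_intros continuous_on_U)

lemma has_vector_derivative_linear_solution:
  "(linear_solution t w has_vector_derivative A \<tau> (linear_solution t w \<tau>)) (at \<tau>)"
  unfolding linear_solution_def[abs_def] by (rule has_vector_derivative_U_apply)

definition correction_map :: "real \<Rightarrow> 'a \<Rightarrow> (real \<Rightarrow>\<^sub>C 'a) \<Rightarrow> (real \<Rightarrow>\<^sub>C 'a)" where
  "correction_map t w z = Bcontfun (green (\<lambda>\<sigma>. f \<sigma> (linear_solution t w \<sigma> + z \<sigma>)))"

lemma admissible_f_linear_solution_plus:
  "admissible (\<lambda>\<sigma>. f \<sigma> (linear_solution t w \<sigma> + apply_bcontfun z \<sigma>))"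
  by (intro admissible_f_comp continuous_intros continuous_on_linear_solution) simp

lemma correction_map_apply:
  "correction_map t w z \<tau> = green (\<lambda>\<sigma>. f \<sigma> (linear_solution t w \<sigma> + z \<sigma>)) \<tau>"
proof -
  have "green (\<lambda>\<sigma>. f \<sigma> (linear_solution t w \<sigma> + z \<sigma>)) \<in> bcontfun"
    using continuous_on_green norm_green_le[OF _ norm_f_le] admissible_f_linear_solution_plus \<alpha>_pos
    by (intro bcontfun_normI[where b="\<alpha> * \<theta>"]) auto
  then show ?thesis by (simp add: correction_map_def Bcontfun_inverse)
qed

lemma correction_map_contraction:
  "dist (correction_map t w z1) (correction_map t w z2) \<le> \<gamma> * \<theta> * dist z1 z2"
proof (rule dist_bound)
  fix \<tau>
  let ?u = "\<lambda>z \<sigma>. f \<sigma> (linear_solution t w \<sigma> + z \<sigma>)"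
  have "norm (?u z1 \<sigma> - ?u z2 \<sigma>) \<le> (\<gamma> * dist z1 z2) * weight \<sigma>" for \<sigma>
  proof -
    have "norm (?u z1 \<sigma> - ?u z2 \<sigma>) \<le> \<gamma> * weight \<sigma> * norm (z1 \<sigma> - z2 \<sigma>)"
      using norm_f_diff_le[of \<sigma> "linear_solution t w \<sigma> + z1 \<sigma>" "linear_solution t w \<sigma> + z2 \<sigma>"]
      by simp
    also have "\<dots> \<le> \<gamma> * weight \<sigma> * dist z1 z2"
      using dist_bounded[of z1 \<sigma> z2] \<gamma>_pos weight_nonneg
      by (intro mult_left_mono) (auto simp: dist_norm)
    finally show ?thesis by (simp add: mult_ac)
  qed
  then have "norm (green (\<lambda>\<sigma>. ?u z1 \<sigma> - ?u z2 \<sigma>) \<tau>) \<le> (\<gamma> * dist z1 z2) * \<theta>"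
    using admissible_diff[OF admissible_f_linear_solution_plus admissible_f_linear_solution_plus]
      \<gamma>_pos by (intro norm_green_le) auto
  then show "dist (correction_map t w z1 \<tau>) (correction_map t w z2 \<tau>) \<le> \<gamma> * \<theta> * dist z1 z2"
    by (simp add: correction_map_apply dist_norm mult_ac
        green_diff[OF admissible_f_linear_solution_plus admissible_f_linear_solution_plus])
qed

definition correction :: "real \<Rightarrow> 'a \<Rightarrow> (real \<Rightarrow>\<^sub>C 'a)" where
  "correction t w = (THE z. correction_map t w z = z)"

lemma correction_map_unique_fixed_point: "\<exists>!z. correction_map t w z = z"
  using contraction_factor_nonneg contraction_factor_lt_1 correction_map_contraction
  by (intro banach_fix_type) blast+

lemma correction_fixed: "correction_map t w (correction t w) = correction t w"
  unfolding correction_def by (rule theI') (rule correction_map_unique_fixed_point)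

lemma correction_unique: "correction_map t w z = z \<Longrightarrow> z = correction t w"
  using correction_map_unique_fixed_point correction_fixed by blast

lemma correction_apply:
  "correction t w \<tau> = green (\<lambda>\<sigma>. f \<sigma> (linear_solution t w \<sigma> + correction t w \<sigma>)) \<tau>"
  by (metis correction_map_apply correction_fixed)

definition L :: "real \<Rightarrow> 'a \<Rightarrow> 'a" where
  "L t w = w + correction t w t"

lemma solves_perturbed_linear_solution_plus_correction:
  "solves perturbed (\<lambda>\<tau>. linear_solution t w \<tau> + correction t w \<tau>)"
  unfolding solves_def
proof
  fix \<tau>
  let ?u = "\<lambda>\<sigma>. f \<sigma> (linear_solution t w \<sigma> + correction t w \<sigma>)"
  have "((\<lambda>\<tau>. linear_solution t w \<tau> + green ?u \<tau>) has_vector_derivative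
      A \<tau> (linear_solution t w \<tau>) + (A \<tau> (green ?u \<tau>) + ?u \<tau>)) (at \<tau>)"
    by (intro has_vector_derivative_add has_vector_derivative_linear_solution
        has_vector_derivative_green admissible_f_linear_solution_plus)
  then show "((\<lambda>\<tau>. linear_solution t w \<tau> + correction t w \<tau>) has_vector_derivative
      perturbed \<tau> (linear_solution t w \<tau> + correction t w \<tau>)) (at \<tau>)"
    by (simp add: correction_apply[symmetric] perturbed_def blinfun.bilinear_simps algebra_simps)
qed

lemma H_L: "H t (L t w) = w"
  using H_solution[OF solves_perturbed_linear_solution_plus_correction[of t w], where \<tau>=t]
  by (simp add: L_def correction_apply[symmetric])

lemma L_H: "L t (H t v) = v"
proof -
  define y where "y = perturbed_solution t v"
  have y: "solves perturbed y" unfolding y_def by (rule perturbed_solution(2))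
  define z where "z = green (\<lambda>\<sigma>. f \<sigma> (y \<sigma>))"
  have z: "z \<in> bcontfun"
    unfolding z_def
    using continuous_on_green norm_green_le[OF _ norm_f_le] admissible_f_comp[OF continuous_on_solves[OF y]] \<alpha>_pos
    by (intro bcontfun_normI[where b="\<alpha> * \<theta>"]) auto
  have "solves (\<lambda>t x. A t x) (\<lambda>\<tau>. H \<tau> (y \<tau>))" by (rule solves_linear_H[OF y])
  with evolution have "T \<tau> t (H t (y t)) = H \<tau> (y \<tau>)" for \<tau>
    unfolding evolution_op_def by blast
  then have y_split: "y \<tau> = linear_solution t (H t v) \<tau> + z \<tau>" for \<tau>
    using H_solution[OF y, of \<tau>]
    by (simp add: evolution_op_eq[OF evolution] linear_solution_def y_def perturbed_solution z_def)
  have "correction_map t (H t v) (Bcontfun z) = Bcontfun z"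
    by (rule bcontfun_eqI)
      (simp only: correction_map_apply Bcontfun_inverse[OF z] y_split[symmetric], simp add: z_def)
  then have "Bcontfun z = correction t (H t v)" by (rule correction_unique)
  then show ?thesis
    using y_split[of t] Bcontfun_inverse[OF z] by (simp add: L_def y_def perturbed_solution)
qed

lemma norm_L_diff_le: "norm (L t w - w) \<le> \<alpha> * \<theta>"
  using norm_green_le[OF admissible_f_linear_solution_plus norm_f_le] \<alpha>_pos
  by (simp add: L_def correction_apply[of t w t])

lemma linear_solution_lipschitz_on_interval:
  obtains M where "M > 0"
    "\<And>\<sigma> w w0. c \<le> \<sigma> \<Longrightarrow> \<sigma> \<le> d \<Longrightarrow>
      norm (linear_solution t w \<sigma> - linear_solution t w0 \<sigma>) \<le> M * norm (w - w0)"
proof -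
  have "bounded (U ` {c..d})"
    by (rule compact_imp_bounded[OF compact_continuous_image[OF continuous_on_U compact_Icc]])
  then obtain MU where "\<forall>\<sigma>\<in>{c..d}. norm (U \<sigma>) \<le> MU"
    by (auto simp: bounded_iff)
  then have MU: "\<And>\<sigma>. c \<le> \<sigma> \<Longrightarrow> \<sigma> \<le> d \<Longrightarrow> norm (U \<sigma>) \<le> MU" by simp
  show ?thesis
  proof (rule that)
    show "max MU 0 * norm (V t) + 1 > 0" by (simp add: add_nonneg_pos)
    fix \<sigma> w w0 assume "c \<le> \<sigma>" "\<sigma> \<le> d"
    have "norm (linear_solution t w \<sigma> - linear_solution t w0 \<sigma>) = norm (U \<sigma> (V t (w - w0)))"
      by (simp add: linear_solution_def blinfun.bilinear_simps)
    also have "\<dots> \<le> norm (U \<sigma>) * (norm (V t) * norm (w - w0))"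
      by (rule order_trans[OF norm_blinfun mult_left_mono[OF norm_blinfun]]) simp
    also have "\<dots> \<le> max MU 0 * (norm (V t) * norm (w - w0))"
      using MU[OF \<open>c \<le> \<sigma>\<close> \<open>\<sigma> \<le> d\<close>] by (intro mult_right_mono) auto
    also have "\<dots> \<le> (max MU 0 * norm (V t) + 1) * norm (w - w0)"
      by (simp add: algebra_simps)
    finally show "norm (linear_solution t w \<sigma> - linear_solution t w0 \<sigma>)
        \<le> (max MU 0 * norm (V t) + 1) * norm (w - w0)" .
  qed
qed

definition correction_iterate :: "real \<Rightarrow> 'a \<Rightarrow> nat \<Rightarrow> (real \<Rightarrow>\<^sub>C 'a)" where
  "correction_iterate t w n = (correction_map t w ^^ n) 0"

lemma correction_iterate_Suc_apply:
  "correction_iterate t w (Suc n) \<tau> =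
    green (\<lambda>\<sigma>. f \<sigma> (linear_solution t w \<sigma> + correction_iterate t w n \<sigma>)) \<tau>"
  by (simp add: correction_iterate_def correction_map_apply)

lemma dist_correction_iterate_le:
  "dist (correction_iterate t w n) (correction t w) \<le> (\<gamma> * \<theta>) ^ n * (\<alpha> * \<theta>)"
proof (induction n)
  case 0
  have "norm (correction t w \<tau>) \<le> \<alpha> * \<theta>" for \<tau>
    unfolding correction_apply[of t w \<tau>]
    using norm_green_le[OF admissible_f_linear_solution_plus norm_f_le] \<alpha>_pos by simp
  then have "dist 0 (correction t w) \<le> \<alpha> * \<theta>"
    by (intro dist_bound) (simp add: dist_norm)
  then show ?case by (simp add: correction_iterate_def)
next
  case (Suc n)
  have "dist (correction_iterate t w (Suc n)) (correction t w)
      = dist (correction_map t w (correction_iterate t w n)) (correction_map t w (correction t w))"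
    by (simp add: correction_iterate_def correction_fixed)
  also have "\<dots> \<le> \<gamma> * \<theta> * dist (correction_iterate t w n) (correction t w)"
    by (rule correction_map_contraction)
  also have "\<dots> \<le> \<gamma> * \<theta> * ((\<gamma> * \<theta>) ^ n * (\<alpha> * \<theta>))"
    by (rule mult_left_mono[OF Suc.IH contraction_factor_nonneg])
  finally show ?case by (simp add: mult_ac)
qed

lemma correction_iterate_continuous:
  assumes "R \<ge> 0" "e > 0"
  shows "\<exists>\<delta>>0. \<forall>w. dist w w0 < \<delta> \<longrightarrow> (\<forall>\<tau>. t - R \<le> \<tau> \<longrightarrow> \<tau> \<le> t + R \<longrightarrow>
    norm (correction_iterate t w n \<tau> - correction_iterate t w0 n \<tau>) \<le> e)"
  using assms
proof (induction n arbitrary: R e)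
  case 0
  then show ?case by (auto simp: correction_iterate_def)
next
  case (Suc n)
  obtain S \<eta> where S: "R \<le> S" "\<eta> > 0"
    and small_green: "\<And>u1 u2 \<tau>. admissible u1 \<Longrightarrow> admissible u2 \<Longrightarrow>
      (\<And>\<sigma>. norm (u1 \<sigma> - u2 \<sigma>) \<le> 2 * \<alpha> * weight \<sigma>) \<Longrightarrow>
      (\<And>\<sigma>. t - S \<le> \<sigma> \<Longrightarrow> \<sigma> \<le> t + S \<Longrightarrow> norm (u1 \<sigma> - u2 \<sigma>) \<le> \<eta> * weight \<sigma>) \<Longrightarrow>
      t - R \<le> \<tau> \<Longrightarrow> \<tau> \<le> t + R \<Longrightarrow> norm (green u1 \<tau> - green u2 \<tau>) < e"
    by (rule green_diff_small[of e "2 * \<alpha>" R t]) (use Suc.prems \<alpha>_pos in auto)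
  have \<eta>': "\<eta> / (2 * \<gamma>) > 0" using S \<gamma>_pos by simp
  obtain \<delta>1 where \<delta>1: "\<delta>1 > 0" "\<And>w \<sigma>. dist w w0 < \<delta>1 \<Longrightarrow> t - S \<le> \<sigma> \<Longrightarrow> \<sigma> \<le> t + S \<Longrightarrow>
      norm (correction_iterate t w n \<sigma> - correction_iterate t w0 n \<sigma>) \<le> \<eta> / (2 * \<gamma>)"
    using Suc.IH[OF _ \<eta>'] Suc.prems S by (meson order_trans)
  obtain M where M: "M > 0" "\<And>\<sigma> w w'. t - S \<le> \<sigma> \<Longrightarrow> \<sigma> \<le> t + S \<Longrightarrow>
      norm (linear_solution t w \<sigma> - linear_solution t w' \<sigma>) \<le> M * norm (w - w')"
    by (rule linear_solution_lipschitz_on_interval[where c="t - S" and d="t + S" and t=t]) blast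
  show ?case
  proof (intro exI conjI allI impI)
    show "min \<delta>1 (\<eta> / (2 * \<gamma> * M)) > 0" using \<delta>1 S M \<gamma>_pos by simp
    fix w \<tau> assume w: "dist w w0 < min \<delta>1 (\<eta> / (2 * \<gamma> * M))" and \<tau>: "t - R \<le> \<tau>" "\<tau> \<le> t + R"
    let ?u = "\<lambda>w \<sigma>. f \<sigma> (linear_solution t w \<sigma> + correction_iterate t w n \<sigma>)"
    have "norm (?u w \<sigma> - ?u w0 \<sigma>) \<le> \<eta> * weight \<sigma>" if "t - S \<le> \<sigma>" "\<sigma> \<le> t + S" for \<sigma>
    proof -
      have "M * norm (w - w0) \<le> M * (\<eta> / (2 * \<gamma> * M))"
        using w M by (intro mult_left_mono) (auto simp: dist_norm)
      then have "norm (linear_solution t w \<sigma> - linear_solution t w0 \<sigma>) \<le> \<eta> / (2 * \<gamma>)"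
        using M(2)[OF that, of w w0] M(1) by simp
      moreover have "norm (correction_iterate t w n \<sigma> - correction_iterate t w0 n \<sigma>) \<le> \<eta> / (2 * \<gamma>)"
        using \<delta>1(2)[OF _ that] w by simp
      ultimately have "\<gamma> * weight \<sigma> * (norm (linear_solution t w \<sigma> - linear_solution t w0 \<sigma>)
          + norm (correction_iterate t w n \<sigma> - correction_iterate t w0 n \<sigma>)) \<le> \<gamma> * weight \<sigma> * (\<eta> / \<gamma>)"
        using \<gamma>_pos weight_nonneg by (intro mult_left_mono) auto
      also have "\<gamma> * weight \<sigma> * (\<eta> / \<gamma>) = \<eta> * weight \<sigma>" using \<gamma>_pos by simp
      finally show ?thesis by (rule order_trans[OF norm_f_diff_le_add])
    qed
    then have "norm (green (?u w) \<tau> - green (?u w0) \<tau>) < e"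
      by (intro small_green norm_f_diff_le_twice admissible_f_linear_solution_plus \<tau>) auto
    then show "norm (correction_iterate t w (Suc n) \<tau> - correction_iterate t w0 (Suc n) \<tau>) \<le> e"
      by (simp add: correction_iterate_Suc_apply)
  qed
qed

lemma continuous_on_L: "continuous_on UNIV (L t)"
proof (intro continuous_at_imp_continuous_on ballI)
  fix w0 :: 'a
  show "isCont (L t) w0"
    unfolding continuous_at_eps_delta
  proof (intro allI impI)
    fix e :: real assume e: "e > 0"
    have "(\<lambda>n. (\<gamma> * \<theta>) ^ n * (\<alpha> * \<theta>)) \<longlonglongrightarrow> 0 * (\<alpha> * \<theta>)"
      using contraction_factor_lt_1 contraction_factor_nonneg by (intro tendsto_intros) auto
    then have "\<forall>\<^sub>F n in sequentially. (\<gamma> * \<theta>) ^ n * (\<alpha> * \<theta>) < e / 4"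
      using e by (intro order_tendstoD(2)) auto
    then obtain n where n: "(\<gamma> * \<theta>) ^ n * (\<alpha> * \<theta>) < e / 4"
      by (auto simp: eventually_sequentially)
    obtain \<delta> where \<delta>: "\<delta> > 0" "\<And>w. dist w w0 < \<delta> \<Longrightarrow>
        norm (correction_iterate t w n t - correction_iterate t w0 n t) \<le> e / 4"
      using correction_iterate_continuous[of 0 "e / 4" w0 t n] e by auto
    have close: "norm (correction t w t - correction_iterate t w n t) \<le> e / 4" for w
      using dist_bounded[of "correction t w" t "correction_iterate t w n"]
        dist_correction_iterate_le[of t w n] n
      by (simp add: dist_commute dist_norm)
    show "\<exists>d>0. \<forall>w. dist w w0 < d \<longrightarrow> dist (L t w) (L t w0) < e"
    proof (intro exI conjI allI impI)
      show "min \<delta> (e / 4) > 0" using \<delta> e by simp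
      fix w assume w: "dist w w0 < min \<delta> (e / 4)"
      let ?d1 = "correction t w t - correction_iterate t w n t"
      let ?d2 = "correction_iterate t w n t - correction_iterate t w0 n t"
      let ?d3 = "correction t w0 t - correction_iterate t w0 n t"
      have "L t w - L t w0 = (w - w0) + ?d1 + ?d2 - ?d3"
        by (simp add: L_def algebra_simps)
      then have "norm (L t w - L t w0) \<le> norm (w - w0) + norm ?d1 + norm ?d2 + norm ?d3"
        unfolding \<open>L t w - L t w0 = _\<close>
        using norm_triangle_ineq4[of "(w - w0) + ?d1 + ?d2" ?d3]
          norm_triangle_ineq[of "(w - w0) + ?d1" ?d2] norm_triangle_ineq[of "w - w0" ?d1]
        by linarith
      then have "norm (L t w - L t w0) \<le> norm (w - w0) + e / 4 + e / 4 + e / 4"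
        using close[of w] close[of w0] \<delta>(2)[of w] w by simp
      then show "dist (L t w) (L t w0) < e" using w by (simp add: dist_norm)
    qed
  qed
qed

lemma homeomorphism_H: "homeomorphism UNIV UNIV (H t) (L t)"
  unfolding homeomorphism_def
  by (auto simp: H_L L_H continuous_on_H continuous_on_L
      intro: image_eqI[of _ _ "H t _"] image_eqI[of _ _ "L t _"])

lemma inv_H: "inv (H t) = L t"
  using homeomorphism_H[of t] by (auto simp: homeomorphism_def intro!: inv_equality)

lemma top_equiv_via_H: "top_equiv_via (\<lambda>t x. A t x) (\<lambda>t x. A t x + f t x) H"
  unfolding top_equiv_via_def inv_H
proof (intro conjI allI impI)
  show "\<exists>R. \<forall>t x. R \<le> norm x \<longrightarrow> M \<le> norm (H t x)" for M
    using norm_large_if_displacement_bounded norm_H_diff_le by blast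
  show "\<exists>R. \<forall>t y. R \<le> norm y \<longrightarrow> M \<le> norm (L t y)" for M
    using norm_large_if_displacement_bounded norm_L_diff_le by blast
  show "\<exists>L. homeomorphism UNIV UNIV (H t) L" for t
    using homeomorphism_H by blast
  show "solves (\<lambda>t x. A t x) (\<lambda>t. H t (x t))" if "solves (\<lambda>t x. A t x + f t x) x" for x
    using solves_linear_H that by (simp add: perturbed_def[abs_def])
qed

end

theorem mainTheorem10:
  fixes A :: "real \<Rightarrow> ('a::banach \<Rightarrow>\<^sub>L 'a)"
    and T :: "real \<Rightarrow> real \<Rightarrow> ('a \<Rightarrow>\<^sub>L 'a)"
    and f :: "real \<Rightarrow> 'a \<Rightarrow> 'a"
    and h k \<mu> \<nu> h' k' :: "real \<Rightarrow> real"
    and a b \<epsilon> K \<alpha> \<gamma> :: real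
  assumes A_cont: "continuous_on UNIV A"
    and T_evol: "evolution_op A T"
    and gr: "growth_rate h" "growth_rate k" "growth_rate \<mu>" "growth_rate \<nu>"
    and h_deriv: "\<And>t. (h has_real_derivative h' t) (at t)"
    and k_deriv: "\<And>t. (k has_real_derivative k' t) (at t)"
    and dich: "nonuniform_dichotomy T h k \<mu> \<nu> a b \<epsilon> K"
    and b_pos: "b > 0"
    and f_cont: "continuous_on UNIV (\<lambda>(t, x). f t x)"
    and \<alpha>_pos: "\<alpha> > 0" and \<gamma>_pos: "\<gamma> > 0"
    and f_bound: "\<And>t x. norm (f t x) \<le>
       \<alpha> * min (h' t / h t * \<mu> \<bar>t\<bar> powr (- \<epsilon>)) (k' t / k t * \<nu> \<bar>t\<bar> powr (- \<epsilon>))"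
    and f_lip: "\<And>t x1 x2. norm (f t x1 - f t x2) \<le>
       \<gamma> * min (h' t / h t * \<mu> \<bar>t\<bar> powr (- \<epsilon>)) (k' t / k t * \<nu> \<bar>t\<bar> powr (- \<epsilon>))
         * norm (x1 - x2)"
    and small: "K * \<gamma> * (1 / \<bar>a\<bar> + 1 / b) < 1"
  shows "\<exists>H. top_equiv_via (\<lambda>t x. A t x) (\<lambda>t x. A t x + f t x) H \<and>
             (\<forall>t x. norm (H t x - x) \<le> K * \<alpha> * (1 / \<bar>a\<bar> + 1 / b))"
proof -
  obtain P where P: "\<And>t s. P t o\<^sub>L T t s = T t s o\<^sub>L P s"
    "\<And>t s. s \<le> t \<Longrightarrow> norm (T t s o\<^sub>L P s) \<le> K * (h t / h s) powr a * \<mu> \<bar>s\<bar> powr \<epsilon>"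
    "\<And>t s. t \<le> s \<Longrightarrow> norm (T t s o\<^sub>L (id_blinfun - P s)) \<le> K * (k s / k t) powr (- b) * \<nu> \<bar>s\<bar> powr \<epsilon>"
    and constants: "a < 0" "\<epsilon> \<ge> 0" "K > 0"
    using dich unfolding nonuniform_dichotomy_def by blast
  interpret dichotomy_perturbation A T P f h k \<mu> \<nu> h' k' a b \<epsilon> K \<alpha> \<gamma>
    by unfold_locales (use assms P constants in auto)
  have "norm (H t x - x) \<le> K * \<alpha> * (1 / \<bar>a\<bar> + 1 / b)" for t x
    using norm_H_diff_le by (simp add: \<theta>_def mult_ac)
  with top_equiv_via_H show ?thesis by blast
qed

end
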